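(* Let $\sigma_W,\sigma_B>0$ and let $G$ be a regular simple undirected graph with vertex set $[n]$. If $(\mathbf{W},\mathbf{B})$ is a separable, $(\sigma_W,\sigma_B)$-disordered energy landscape on $G$, and $I\in V(G)$ is uniformly random and independent of $(\mathbf{W},\mathbf{B})$, then \[ \mathbb{E}(\mathrm{Var}\,A_I)\leq 4\sigma_B^2\quad\text{and}\quad\mathbb{E}\big((\mathrm{Var}\,A_I)^2\big)\leq 1720\,\sigma_B^4, \] where $A_i=\log\sum_{j:\,j\sim i}\exp(-B_{ij})$.
   Context: $j\sim i$ means $(i,j)\in E(G)$. A $(\sigma_W,\sigma_B)$-disordered energy landscape on $G$ is a pair $(\mathbf{W},\mathbf{B})$ of i.i.d. $\mathcal{N}(0,\sigma_W^2)$ well depths $\mathbf{W}=(W_i)_{i\in V(G)}$ and barrier heights $\mathbf{B}=(B_{ij})_{(i,j)\in E(G)}$ with $B_{ij}=B_{ji}\sim\mathcal{N}(0,\sigma_B^2)$ for every edge. It is separable if there exist $f:\mathbb{R}\to\mathbb{R}$ and $\sigma>0$ such that for every vertex $i$, $(B_{ij}-f(W_i))_{j:\,j\sim i}$ is a vector of i.i.d. $\mathcal{N}(0,\sigma^2)$ random variables, also independent of $W_i$. $\mathrm{Var}\,A_I$ denotes the variance over $I$ conditional on $(\mathbf{W},\mathbf{B})$, i.e. $\frac1n\sum_i(A_i-\bar A)^2$; $\mathbb{E}$ is over the landscape. *)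

theory Defs
  imports "HOL-Probability.Probability"
begin

definition simple_graph_on :: "nat \<Rightarrow> (nat \<Rightarrow> nat \<Rightarrow> bool) \<Rightarrow> bool" where
  "simple_graph_on n E \<longleftrightarrow>
     (\<forall>i j. E i j \<longrightarrow> i < n \<and> j < n) \<and> (\<forall>i j. E i j \<longrightarrow> E j i) \<and> (\<forall>i. \<not> E i i)"

definition nbrs :: "nat \<Rightarrow> (nat \<Rightarrow> nat \<Rightarrow> bool) \<Rightarrow> nat \<Rightarrow> nat set" where
  "nbrs n E i = {j \<in> {0..<n}. E i j}"

definition regular_graph :: "nat \<Rightarrow> (nat \<Rightarrow> nat \<Rightarrow> bool) \<Rightarrow> bool" where
  "regular_graph n E \<longleftrightarrow> (\<exists>d. \<forall>i<n. card (nbrs n E i) = d)"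

definition disordered_landscape ::
  "'a measure \<Rightarrow> nat \<Rightarrow> (nat \<Rightarrow> nat \<Rightarrow> bool) \<Rightarrow> real \<Rightarrow> real \<Rightarrow>
   (nat \<Rightarrow> 'a \<Rightarrow> real) \<Rightarrow> (nat \<Rightarrow> nat \<Rightarrow> 'a \<Rightarrow> real) \<Rightarrow> bool" where
  "disordered_landscape M n E \<sigma>W \<sigma>B W B \<longleftrightarrow>
     prob_space.indep_vars M (\<lambda>_. borel) W {0..<n} \<and>
     (\<forall>i<n. distributed M lborel (W i) (normal_density 0 \<sigma>W)) \<and>
     (\<forall>i j. E i j \<longrightarrow> B i j = B j i) \<and>
     prob_space.indep_vars M (\<lambda>_. borel) (\<lambda>(i, j). B i j) {(i, j). E i j \<and> i < j} \<and>
     (\<forall>i j. E i j \<longrightarrow> distributed M lborel (B i j) (normal_density 0 \<sigma>B))"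

definition separable ::
  "'a measure \<Rightarrow> nat \<Rightarrow> (nat \<Rightarrow> nat \<Rightarrow> bool) \<Rightarrow>
   (nat \<Rightarrow> 'a \<Rightarrow> real) \<Rightarrow> (nat \<Rightarrow> nat \<Rightarrow> 'a \<Rightarrow> real) \<Rightarrow> bool" where
  "separable M n E W B \<longleftrightarrow>
     (\<exists>(f :: real \<Rightarrow> real) (\<sigma> :: real). \<sigma> > 0 \<and>
       (\<forall>i<n.
          prob_space.indep_vars M (\<lambda>_. borel)
            (\<lambda>k. case k of None \<Rightarrow> W i | Some j \<Rightarrow> (\<lambda>\<omega>. B i j \<omega> - f (W i \<omega>)))
            (insert None (Some ` nbrs n E i)) \<and>
          (\<forall>j \<in> nbrs n E i. distributed M lborel (\<lambda>\<omega>. B i j \<omega> - f (W i \<omega>)) (normal_density 0 \<sigma>))))"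

definition A_val :: "nat \<Rightarrow> (nat \<Rightarrow> nat \<Rightarrow> bool) \<Rightarrow> (nat \<Rightarrow> nat \<Rightarrow> 'a \<Rightarrow> real) \<Rightarrow> nat \<Rightarrow> 'a \<Rightarrow> real" where
  "A_val n E B i \<omega> = ln (\<Sum>j \<in> nbrs n E i. exp (- B i j \<omega>))"

text \<open>Var A_I for I uniform on [n], conditional on the landscape.\<close>

definition var_A :: "nat \<Rightarrow> (nat \<Rightarrow> nat \<Rightarrow> bool) \<Rightarrow> (nat \<Rightarrow> nat \<Rightarrow> 'a \<Rightarrow> real) \<Rightarrow> 'a \<Rightarrow> real" where
  "var_A n E B \<omega> =
     (let m = (\<Sum>i<n. A_val n E B i \<omega>) / real n
      in (\<Sum>i<n. (A_val n E B i \<omega> - m)\<^sup>2) / real n)"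

end

(*
  Each A_i is the log-partition function ln (sum_j exp (-B_ij)) of the d independent
  N(0, sigma_B^2) barriers around i, so by regularity all A_i have the same mean c.
  The empirical variance is at most the average of (A_i - c)^2, and its square at most
  the average of (A_i - c)^4. The Gaussian Poincare inequality Var F <= sigma^2 E |grad F|^2,
  obtained from the one-dimensional case and the Efron-Stein inequality, applies to the
  log-partition function, whose gradient is minus the Gibbs distribution and so has norm
  at most 1: hence E (A_i - c)^2 <= sigma_B^2. Applied to (A_i - c)^2 it gives
  Var (A_i - c)^2 <= 4 sigma_B^4 and so E (A_i - c)^4 <= 5 sigma_B^4.
*)

theory Submission
  imports Defs
begin

lemma (in finite_measure) integrable_sq_if_nn_integral_sq_diff_finite:
  fixes g :: "'a \<Rightarrow> real"
  assumes gm: "g \<in> borel_measurable M"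
    and fin: "(\<integral>\<^sup>+x. ennreal ((g x - a)\<^sup>2) \<partial>M) < \<infinity>"
  shows "integrable M (\<lambda>x. (g x)\<^sup>2)"
proof (rule Bochner_Integration.integrable_bound)
  have "integrable M (\<lambda>x. (g x - a)\<^sup>2)"
    using fin gm by (intro integrableI_nonneg) (auto simp: less_top)
  then show "integrable M (\<lambda>x. 2 * (g x - a)\<^sup>2 + 2 * a\<^sup>2)"
    by auto
  show "(\<lambda>x. (g x)\<^sup>2) \<in> borel_measurable M" using gm by measurable
  have "(g x)\<^sup>2 \<le> 2 * (g x - a)\<^sup>2 + 2 * a\<^sup>2" for x
  proof -
    have "0 \<le> (g x - 2 * a)\<^sup>2" by simp
    then show ?thesis by (simp add: power2_eq_square algebra_simps)
  qed
  then show "AE x in M. norm ((g x)\<^sup>2) \<le> norm (2 * (g x - a)\<^sup>2 + 2 * a\<^sup>2)"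
    by (auto intro!: AE_I2)
qed

lemma (in prob_space) nn_integral_sq_diff_eq:
  fixes g :: "'a \<Rightarrow> real"
  assumes gm: "g \<in> borel_measurable M"
  shows "(\<integral>\<^sup>+x. ennreal ((g x - c)\<^sup>2) \<partial>M) =
         (\<integral>\<^sup>+x. ennreal ((g x - expectation g)\<^sup>2) \<partial>M) + ennreal ((expectation g - c)\<^sup>2)"
proof (cases "integrable M (\<lambda>x. (g x)\<^sup>2)")
  case True
  have gi: "integrable M g"
    by (rule square_integrable_imp_integrable[OF gm True])
  define \<mu> where "\<mu> = expectation g"
  have sq_int: "integrable M (\<lambda>x. (g x - a)\<^sup>2)" for a
  proof -
    have "integrable M (\<lambda>x. (g x)\<^sup>2 - 2 * a * g x + a\<^sup>2)"
      using True gi by (intro Bochner_Integration.integrable_add Bochner_Integration.integrable_diff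
          integrable_mult_right) auto
    moreover have "(\<lambda>x. (g x)\<^sup>2 - 2 * a * g x + a\<^sup>2) = (\<lambda>x. (g x - a)\<^sup>2)"
      by (auto simp: fun_eq_iff power2_eq_square algebra_simps)
    ultimately show ?thesis by metis
  qed
  have "(\<integral>x. (g x - c)\<^sup>2 \<partial>M) = (\<integral>x. (g x - \<mu>)\<^sup>2 + 2 * (\<mu> - c) * g x + (c\<^sup>2 - \<mu>\<^sup>2) \<partial>M)"
    by (intro Bochner_Integration.integral_cong) (auto simp: power2_eq_square algebra_simps)
  also have "\<dots> = (\<integral>x. (g x - \<mu>)\<^sup>2 \<partial>M) + 2 * (\<mu> - c) * \<mu> + (c\<^sup>2 - \<mu>\<^sup>2)"
    using sq_int gi by (simp add: \<mu>_def prob_space)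
  also have "\<dots> = (\<integral>x. (g x - \<mu>)\<^sup>2 \<partial>M) + (\<mu> - c)\<^sup>2"
    by (simp add: power2_eq_square algebra_simps)
  finally have eq: "(\<integral>x. (g x - c)\<^sup>2 \<partial>M) = (\<integral>x. (g x - \<mu>)\<^sup>2 \<partial>M) + (\<mu> - c)\<^sup>2" .
  have "(\<integral>\<^sup>+x. ennreal ((g x - c)\<^sup>2) \<partial>M) = ennreal (\<integral>x. (g x - c)\<^sup>2 \<partial>M)"
    using sq_int by (rule nn_integral_eq_integral) simp
  also have "\<dots> = ennreal (\<integral>x. (g x - \<mu>)\<^sup>2 \<partial>M) + ennreal ((\<mu> - c)\<^sup>2)"
    unfolding eq by (rule ennreal_plus) (simp_all add: integral_nonneg_AE)
  also have "ennreal (\<integral>x. (g x - \<mu>)\<^sup>2 \<partial>M) = (\<integral>\<^sup>+x. ennreal ((g x - \<mu>)\<^sup>2) \<partial>M)"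
    using sq_int by (rule nn_integral_eq_integral[symmetric]) simp
  finally show ?thesis unfolding \<mu>_def .
next
  case False
  then have "(\<integral>\<^sup>+x. ennreal ((g x - a)\<^sup>2) \<partial>M) = \<infinity>" for a
    using integrable_sq_if_nn_integral_sq_diff_finite[OF gm, of a] by (auto simp: less_top[symmetric])
  then show ?thesis by simp
qed

lemma (in prob_space) nn_integral_sq_dev_mean_le:
  fixes g :: "'a \<Rightarrow> real"
  assumes "g \<in> borel_measurable M"
  shows "(\<integral>\<^sup>+x. ennreal ((g x - expectation g)\<^sup>2) \<partial>M) \<le> (\<integral>\<^sup>+x. ennreal ((g x - c)\<^sup>2) \<partial>M)"
  by (subst nn_integral_sq_diff_eq[OF assms, of c]) simp

lemma (in prob_space) sq_expectation_le_nn_integral_sq: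
  fixes g :: "'a \<Rightarrow> real"
  assumes "g \<in> borel_measurable M"
  shows "ennreal ((expectation g)\<^sup>2) \<le> (\<integral>\<^sup>+x. ennreal ((g x)\<^sup>2) \<partial>M)"
  using nn_integral_sq_diff_eq[OF assms, of 0] by simp

section \<open>One-dimensional Gaussian Poincare inequality\<close>

lemma sq_diff_le_integral_deriv_sq:
  fixes g g' :: "real \<Rightarrow> real" and a b :: real
  assumes ab: "a \<le> b"
    and der: "\<And>t. (g has_real_derivative g' t) (at t)"
    and cont: "continuous_on UNIV g'"
  shows "(g b - g a)\<^sup>2 \<le> (b - a) * integral {a..b} (\<lambda>t. (g' t)\<^sup>2)"
proof (cases "a = b")
  case True then show ?thesis by simp
next
  case False
  then have lt: "a < b" using ab by simp
  \<comment> \<open>Cauchy-Schwarz, as the integral of \<open>(g' - c)\<^sup>2 \<ge> 0\<close> with \<open>c\<close> the mean slope\<close>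
  define D where "D = g b - g a"
  define c where "c = D / (b - a)"
  have F: "(g' has_integral D) {a..b}"
    unfolding D_def
    by (rule fundamental_theorem_of_calculus[OF ab])
       (metis der has_real_derivative_iff_has_vector_derivative has_vector_derivative_at_within)
  have I2: "(\<lambda>t. (g' t)\<^sup>2) integrable_on {a..b}"
    by (intro integrable_continuous_interval continuous_on_power continuous_on_subset[OF cont]) auto
  then have I2h: "((\<lambda>t. (g' t)\<^sup>2) has_integral integral {a..b} (\<lambda>t. (g' t)\<^sup>2)) {a..b}"
    by (simp add: has_integral_integral)
  have "((\<lambda>t. (g' t)\<^sup>2 - 2 * c * g' t + c\<^sup>2) has_integral
          (integral {a..b} (\<lambda>t. (g' t)\<^sup>2) - 2 * c * D + c\<^sup>2 * (b - a))) {a..b}"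
  proof -
    have c2: "((\<lambda>t. c\<^sup>2) has_integral c\<^sup>2 * (b - a)) {a..b}"
      using has_integral_const_real[of "c\<^sup>2" a b] ab by (simp add: mult.commute)
    show ?thesis
      by (rule has_integral_add[OF has_integral_diff[OF I2h has_integral_mult_right[OF F]] c2])
  qed
  moreover have "\<And>t. 0 \<le> (g' t)\<^sup>2 - 2 * c * g' t + c\<^sup>2"
  proof -
    fix t have "(g' t)\<^sup>2 - 2 * c * g' t + c\<^sup>2 = (g' t - c)\<^sup>2" by (simp add: power2_eq_square algebra_simps)
    then show "0 \<le> (g' t)\<^sup>2 - 2 * c * g' t + c\<^sup>2" by simp
  qed
  ultimately have "0 \<le> integral {a..b} (\<lambda>t. (g' t)\<^sup>2) - 2 * c * D + c\<^sup>2 * (b - a)"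
    by (rule has_integral_nonneg)
  moreover have "2 * c * D - c\<^sup>2 * (b - a) = D\<^sup>2 / (b - a)"
    using lt unfolding c_def by (simp add: divide_simps power2_eq_square)
  ultimately have "D\<^sup>2 / (b - a) \<le> integral {a..b} (\<lambda>t. (g' t)\<^sup>2)" by linarith
  then have "D\<^sup>2 \<le> (b - a) * integral {a..b} (\<lambda>t. (g' t)\<^sup>2)" using lt by (simp add: pos_divide_le_eq mult.commute)
  then show ?thesis by (simp add: D_def)
qed

lemma sq_diff_le_nn_integral_deriv_sq:
  fixes g g' :: "real \<Rightarrow> real" and a b :: real
  assumes ab: "a \<le> b"
    and der: "\<And>t. (g has_real_derivative g' t) (at t)"
    and cont: "continuous_on UNIV g'"
  shows "ennreal ((g b - g a)\<^sup>2) \<le> ennreal (b - a) * (\<integral>\<^sup>+t. ennreal ((g' t)\<^sup>2) * indicator {a..b} t \<partial>lborel)"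
proof -
  have I2: "(\<lambda>t. (g' t)\<^sup>2) integrable_on {a..b}"
    by (intro integrable_continuous_interval continuous_on_power continuous_on_subset[OF cont]) auto
  then have "((\<lambda>t. (g' t)\<^sup>2) has_integral integral {a..b} (\<lambda>t. (g' t)\<^sup>2)) {a..b}"
    by (simp add: has_integral_integral)
  then have "((\<lambda>t. indicator {a..b} t * (g' t)\<^sup>2) has_integral integral {a..b} (\<lambda>t. (g' t)\<^sup>2)) UNIV"
  proof -
    have "(\<lambda>t. indicator {a..b} t * (g' t)\<^sup>2) = (\<lambda>x. if x \<in> {a..b} then (g' x)\<^sup>2 else 0)"
      by (auto simp: indicator_def)
    moreover assume "((\<lambda>t. (g' t)\<^sup>2) has_integral integral {a..b} (\<lambda>t. (g' t)\<^sup>2)) {a..b}"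
    then have "((\<lambda>x. if x \<in> {a..b} then (g' x)\<^sup>2 else 0) has_integral integral {a..b} (\<lambda>t. (g' t)\<^sup>2)) UNIV"
      by (subst has_integral_restrict_UNIV)
    ultimately show ?thesis by simp
  qed
  moreover have gm: "g' \<in> borel_measurable borel"
    using cont by (simp add: borel_measurable_continuous_onI)
  ultimately have eq: "integral\<^sup>N lborel (\<lambda>t. indicator {a..b} t * (g' t)\<^sup>2) = integral {a..b} (\<lambda>t. (g' t)\<^sup>2)"
    by (intro nn_integral_has_integral_lborel) auto
  have "(\<integral>\<^sup>+t. ennreal ((g' t)\<^sup>2) * indicator {a..b} t \<partial>lborel) = integral\<^sup>N lborel (\<lambda>t. indicator {a..b} t * (g' t)\<^sup>2)"
    by (intro nn_integral_cong) (simp split: split_indicator)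
  also note eq
  finally have e2: "(\<integral>\<^sup>+t. ennreal ((g' t)\<^sup>2) * indicator {a..b} t \<partial>lborel) = ennreal (integral {a..b} (\<lambda>t. (g' t)\<^sup>2))" .
  have "(g b - g a)\<^sup>2 \<le> (b - a) * integral {a..b} (\<lambda>t. (g' t)\<^sup>2)"
    by (rule sq_diff_le_integral_deriv_sq[OF ab der cont])
  moreover have "0 \<le> integral {a..b} (\<lambda>t. (g' t)\<^sup>2)"
    using I2 by (intro integral_nonneg) auto
  ultimately show ?thesis unfolding e2 using ab
    by (subst ennreal_mult[symmetric]) (auto intro!: ennreal_leI)
qed

lemma sq_diff_0_le_nn_integral_deriv_sq_segment:
  fixes g g' :: "real \<Rightarrow> real"
  assumes der: "\<And>t. (g has_real_derivative g' t) (at t)"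
    and cont: "continuous_on UNIV g'"
  shows "ennreal ((g y - g 0)\<^sup>2)
    \<le> ennreal \<bar>y\<bar> * (\<integral>\<^sup>+t. ennreal ((g' t)\<^sup>2) * indicator {min 0 y..max 0 y} t \<partial>lborel)"
proof (cases "0 \<le> y")
  case True
  then show ?thesis using sq_diff_le_nn_integral_deriv_sq[OF True der cont] by simp
next
  case False
  then have "y \<le> 0" by simp
  from sq_diff_le_nn_integral_deriv_sq[OF this der cont] False show ?thesis
    by (simp add: power2_commute)
qed

lemma nn_integral_normal_density_abs_atLeast:
  fixes \<sigma> t :: real
  assumes s: "\<sigma> > 0" and t: "t > 0"
  shows "(\<integral>\<^sup>+y. ennreal (normal_density 0 \<sigma> y * \<bar>y\<bar>) * indicator {t..} y \<partial>lborel) = ennreal (\<sigma>\<^sup>2 * normal_density 0 \<sigma> t)"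
proof -
  have "(\<integral>\<^sup>+y. ennreal (normal_density 0 \<sigma> y * \<bar>y\<bar>) * indicator {t..} y \<partial>lborel)
      = (\<integral>\<^sup>+y. ennreal (normal_density 0 \<sigma> y * y) * indicator {t..} y \<partial>lborel)"
    using t by (intro nn_integral_cong) (auto split: split_indicator)
  also have "\<dots> = ennreal (0 - (- \<sigma>\<^sup>2 * normal_density 0 \<sigma> t))"
  proof (rule nn_integral_FTC_atLeast)
    show "(\<lambda>y. normal_density 0 \<sigma> y * y) \<in> borel_measurable borel" by measurable
    show "\<And>x. t \<le> x \<Longrightarrow> 0 \<le> normal_density 0 \<sigma> x * x" using t by simp
    show "\<And>x. t \<le> x \<Longrightarrow> ((\<lambda>y. - \<sigma>\<^sup>2 * normal_density 0 \<sigma> y) has_real_derivative normal_density 0 \<sigma> x * x) (at x)"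
      unfolding normal_density_def using s
      by (auto intro!: derivative_eq_intros simp: field_simps power2_eq_square)
    have "LIM y at_top. (1 / (2 * \<sigma>\<^sup>2)) * y\<^sup>2 :> at_top"
      using s by (intro filterlim_tendsto_pos_mult_at_top[OF tendsto_const] filterlim_pow_at_top filterlim_ident) auto
    then have "LIM y at_top. - ((1 / (2 * \<sigma>\<^sup>2)) * y\<^sup>2) :> at_bot"
      by (rule filterlim_compose[OF filterlim_uminus_at_bot_at_top])
    then have "((\<lambda>y. exp (- ((1 / (2 * \<sigma>\<^sup>2)) * y\<^sup>2))) \<longlongrightarrow> 0) at_top"
      by (rule filterlim_compose[OF exp_at_bot])
    moreover have "(\<lambda>y. exp (- ((1 / (2 * \<sigma>\<^sup>2)) * y\<^sup>2))) = (\<lambda>y. exp (- (y - 0)\<^sup>2 / (2 * \<sigma>\<^sup>2)))"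
      by (simp add: field_simps)
    ultimately have "((\<lambda>y. exp (- (y - 0)\<^sup>2 / (2 * \<sigma>\<^sup>2))) \<longlongrightarrow> 0) at_top" by simp
    then have "((\<lambda>y. (- \<sigma>\<^sup>2 * (1 / sqrt (2 * pi * \<sigma>\<^sup>2))) * exp (- (y - 0)\<^sup>2 / (2 * \<sigma>\<^sup>2))) \<longlongrightarrow> 0) at_top"
      by (rule tendsto_mult_right_zero)
    then show "((\<lambda>y. - \<sigma>\<^sup>2 * normal_density 0 \<sigma> y) \<longlongrightarrow> 0) at_top"
      unfolding normal_density_def by (simp add: mult.assoc)
  qed
  finally show ?thesis by simp
qed

lemma nn_integral_normal_density_abs_segment:
  fixes \<sigma> t :: real
  assumes s: "\<sigma> > 0" and t: "t \<noteq> 0"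
  shows "(\<integral>\<^sup>+y. ennreal (normal_density 0 \<sigma> y * \<bar>y\<bar>) * indicator {min 0 y..max 0 y} t \<partial>lborel) = ennreal (\<sigma>\<^sup>2 * normal_density 0 \<sigma> t)"
proof (cases "t > 0")
  case True
  have "(\<integral>\<^sup>+y. ennreal (normal_density 0 \<sigma> y * \<bar>y\<bar>) * indicator {min 0 y..max 0 y} t \<partial>lborel)
     = (\<integral>\<^sup>+y. ennreal (normal_density 0 \<sigma> y * \<bar>y\<bar>) * indicator {t..} y \<partial>lborel)"
    using True by (intro nn_integral_cong) (auto split: split_indicator)
  also have "\<dots> = ennreal (\<sigma>\<^sup>2 * normal_density 0 \<sigma> t)" by (rule nn_integral_normal_density_abs_atLeast[OF s True])
  finally show ?thesis .
next
  case False
  then have tn: "t < 0" using t by simp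
  have "(\<integral>\<^sup>+y. ennreal (normal_density 0 \<sigma> y * \<bar>y\<bar>) * indicator {min 0 y..max 0 y} t \<partial>lborel)
     = (\<integral>\<^sup>+y. ennreal (normal_density 0 \<sigma> y * \<bar>y\<bar>) * indicator {..t} y \<partial>lborel)"
    using tn by (intro nn_integral_cong) (auto split: split_indicator)
  also have "\<dots> = ennreal \<bar>-1\<bar> * (\<integral>\<^sup>+y. ennreal (normal_density 0 \<sigma> (0 + (-1) * y) * \<bar>0 + (-1) * y\<bar>) * indicator {..t} (0 + (-1) * y) \<partial>lborel)"
    by (rule nn_integral_real_affine) auto
  also have "\<dots> = (\<integral>\<^sup>+y. ennreal (normal_density 0 \<sigma> y * \<bar>y\<bar>) * indicator {-t..} y \<partial>lborel)"
  proof -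
    have eq: "\<And>y. ennreal (normal_density 0 \<sigma> (0 + (-1) * y) * \<bar>0 + (-1) * y\<bar>) * indicator {..t} (0 + (-1) * y)
       = ennreal (normal_density 0 \<sigma> y * \<bar>y\<bar>) * indicator {-t..} y"
      by (auto simp: normal_density_def split: split_indicator)
    show ?thesis unfolding eq by simp
  qed
  also have "\<dots> = ennreal (\<sigma>\<^sup>2 * normal_density 0 \<sigma> (-t))" by (rule nn_integral_normal_density_abs_atLeast[OF s]) (use tn in simp)
  also have "normal_density 0 \<sigma> (-t) = normal_density 0 \<sigma> t" by (simp add: normal_density_def)
  finally show ?thesis .
qed

lemma gaussian_poincare_1d:
  fixes g g' :: "real \<Rightarrow> real" and \<sigma> :: real
  assumes s: "\<sigma> > 0"
    and der: "\<And>t. (g has_real_derivative g' t) (at t)"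
    and cont: "continuous_on UNIV g'"
  shows "(\<integral>\<^sup>+y. ennreal ((g y - (\<integral>z. g z \<partial>density lborel (normal_density 0 \<sigma>)))\<^sup>2) \<partial>density lborel (normal_density 0 \<sigma>))
         \<le> ennreal (\<sigma>\<^sup>2) * (\<integral>\<^sup>+y. ennreal ((g' y)\<^sup>2) \<partial>density lborel (normal_density 0 \<sigma>))"
proof -
  let ?\<phi> = "normal_density 0 \<sigma>"
  have gc: "continuous_on UNIV g"
    using der by (intro DERIV_continuous_on) auto
  have gm[measurable]: "g \<in> borel_measurable borel"
    using gc by (simp add: borel_measurable_continuous_onI)
  have g'm[measurable]: "g' \<in> borel_measurable borel"
    using cont by (simp add: borel_measurable_continuous_onI)
  \<comment> \<open>Bound \<open>(g y - g 0)\<^sup>2\<close> by \<open>|y|\<close> times the integral of \<open>g'\<^sup>2\<close> over the segment from 0 to \<open>y\<close>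
    and swap the integrals: the Gaussian weight \<open>\<phi>(y) |y|\<close> of the \<open>y\<close> whose segment contains \<open>t\<close>
    adds up to \<open>\<sigma>\<^sup>2 \<phi>(t)\<close>.\<close>
  let ?K = "\<lambda>y t. ennreal (?\<phi> y * \<bar>y\<bar>) * (ennreal ((g' t)\<^sup>2) * indicator {min 0 y..max 0 y} t)"
  have "(\<integral>\<^sup>+y. ennreal ((g y - (\<integral>z. g z \<partial>density lborel ?\<phi>))\<^sup>2) \<partial>density lborel ?\<phi>)
      \<le> (\<integral>\<^sup>+y. ennreal ((g y - g 0)\<^sup>2) \<partial>density lborel ?\<phi>)"
    by (rule prob_space.nn_integral_sq_dev_mean_le[OF prob_space_normal_density[OF s]]) simp
  also have "\<dots> = (\<integral>\<^sup>+y. ennreal (?\<phi> y) * ennreal ((g y - g 0)\<^sup>2) \<partial>lborel)"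
    by (subst nn_integral_density) auto
  also have "\<dots> \<le> (\<integral>\<^sup>+y. ennreal (?\<phi> y) * (ennreal \<bar>y\<bar> * (\<integral>\<^sup>+t. ennreal ((g' t)\<^sup>2) * indicator {min 0 y..max 0 y} t \<partial>lborel)) \<partial>lborel)"
    by (intro nn_integral_mono mult_left_mono sq_diff_0_le_nn_integral_deriv_sq_segment[OF der cont]) auto
  also have "\<dots> = (\<integral>\<^sup>+y. \<integral>\<^sup>+t. ?K y t \<partial>lborel \<partial>lborel)"
    by (intro nn_integral_cong) (simp add: nn_integral_cmult ennreal_mult mult.assoc)
  also have "\<dots> = (\<integral>\<^sup>+t. \<integral>\<^sup>+y. ?K y t \<partial>lborel \<partial>lborel)"
  proof (rule lborel_pair.Fubini'[symmetric])
    have "case_prod ?K = (\<lambda>p. ennreal (?\<phi> (fst p) * \<bar>fst p\<bar>) * (ennreal ((g' (snd p))\<^sup>2) *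
            (if min 0 (fst p) \<le> snd p \<and> snd p \<le> max 0 (fst p) then 1 else 0)))"
      by (auto simp: fun_eq_iff split: split_indicator)
    also have "\<dots> \<in> borel_measurable (lborel \<Otimes>\<^sub>M lborel)" by measurable
    finally show "case_prod ?K \<in> borel_measurable (lborel \<Otimes>\<^sub>M lborel)" .
  qed
  also have "\<dots> = (\<integral>\<^sup>+t. ennreal ((g' t)\<^sup>2) * (\<integral>\<^sup>+y. ennreal (?\<phi> y * \<bar>y\<bar>) * indicator {min 0 y..max 0 y} t \<partial>lborel) \<partial>lborel)"
  proof (intro nn_integral_cong)
    fix t :: real
    have m: "(\<lambda>y. ennreal (?\<phi> y * \<bar>y\<bar>) * indicator {min 0 y..max 0 y} t) \<in> borel_measurable lborel"
    proof -
      have "(\<lambda>y. ennreal (?\<phi> y * \<bar>y\<bar>) * indicator {min 0 y..max 0 y} t) =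
            (\<lambda>y. ennreal (?\<phi> y * \<bar>y\<bar>) * (if min 0 y \<le> t \<and> t \<le> max 0 y then 1 else 0))"
        by (auto simp: fun_eq_iff split: split_indicator)
      also have "\<dots> \<in> borel_measurable lborel" by measurable
      finally show ?thesis .
    qed
    show "(\<integral>\<^sup>+y. ?K y t \<partial>lborel) = ennreal ((g' t)\<^sup>2) * (\<integral>\<^sup>+y. ennreal (?\<phi> y * \<bar>y\<bar>) * indicator {min 0 y..max 0 y} t \<partial>lborel)"
      by (subst nn_integral_cmult[symmetric, OF m]) (simp add: ac_simps)
  qed
  also have "\<dots> = (\<integral>\<^sup>+t. ennreal ((g' t)\<^sup>2) * ennreal (\<sigma>\<^sup>2 * ?\<phi> t) \<partial>lborel)"
    by (intro nn_integral_cong_AE eventually_mono[OF AE_lborel_singleton[of 0]]) (simp add: nn_integral_normal_density_abs_segment[OF s])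
  also have "\<dots> = ennreal (\<sigma>\<^sup>2) * (\<integral>\<^sup>+t. ennreal (?\<phi> t) * ennreal ((g' t)\<^sup>2) \<partial>lborel)"
    by (subst nn_integral_cmult[symmetric]) (auto intro!: nn_integral_cong simp: ennreal_mult ac_simps)
  also have "\<dots> = ennreal (\<sigma>\<^sup>2) * (\<integral>\<^sup>+y. ennreal ((g' y)\<^sup>2) \<partial>density lborel ?\<phi>)"
    by (subst nn_integral_density) auto
  finally show ?thesis .
qed


section \<open>Efron-Stein inequality\<close>

text \<open>Functions dominated by a multiple of \<open>\<Prod>j. 1 + x\<^sub>j\<^sup>4\<close> are integrable as soon as the
  coordinate law has a finite fourth moment, and integrating out one coordinate keeps them in
  this class; this is all the integrability the Efron-Stein induction needs.\<close>

definition poly_weight :: "'i set \<Rightarrow> ('i \<Rightarrow> real) \<Rightarrow> real" where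
  "poly_weight J x = (\<Prod>j\<in>J. 1 + (x j)^4)"

definition integrate_coord :: "real measure \<Rightarrow> 'i \<Rightarrow> (('i \<Rightarrow> real) \<Rightarrow> real) \<Rightarrow> ('i \<Rightarrow> real) \<Rightarrow> real" where
  "integrate_coord N j F x = (\<integral>u. F (x(j := u)) \<partial>N)"

definition poly_bounded :: "real measure \<Rightarrow> 'i set \<Rightarrow> real \<Rightarrow> (('i \<Rightarrow> real) \<Rightarrow> real) \<Rightarrow> bool" where
  "poly_bounded N J C F \<longleftrightarrow> F \<in> borel_measurable (PiM J (\<lambda>_. N)) \<and>
     (\<forall>x\<in>space (PiM J (\<lambda>_. N)). \<bar>F x\<bar> \<le> C * poly_weight J x)"

lemma poly_weight_ge_1: "finite J \<Longrightarrow> 1 \<le> poly_weight J x"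
  unfolding poly_weight_def by (intro prod_ge_1) auto

lemma poly_weight_pos: "finite J \<Longrightarrow> 0 < poly_weight J x"
  using poly_weight_ge_1[of J x] by simp

lemma poly_weight_fun_upd: "finite J \<Longrightarrow> poly_weight (insert i J) (x(i := y)) = (1 + y^4) * poly_weight (J - {i}) x"
  unfolding poly_weight_def by (subst prod.insert_remove) (auto intro!: prod.cong)

lemma poly_weight_mono: "finite J \<Longrightarrow> I \<subseteq> J \<Longrightarrow> poly_weight I x \<le> poly_weight J x"
  unfolding poly_weight_def by (intro prod_mono2) auto

locale fourth_moment_measure =
  fixes N :: "real measure"
  assumes prob: "prob_space N" and sets_N: "sets N = sets borel" and space_N: "space N = UNIV"
    and integrable_weight: "integrable N (\<lambda>t. 1 + t^4)"
begin

declare sets_N [measurable_cong]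

interpretation N: prob_space N by (rule prob)

definition weight_mean :: real where "weight_mean = (\<integral>t. 1 + t^4 \<partial>N)"

lemma product_sigma_finite_N: "product_sigma_finite (\<lambda>_. N)"
  by (simp add: product_sigma_finite_def N.sigma_finite_measure_axioms)

lemma prob_space_PiM_N: "prob_space (PiM J (\<lambda>_. N))"
  by (intro prob_space_PiM prob)

lemma space_PiM_N: "space (PiM J (\<lambda>_. N)) = extensional J"
  by (simp add: space_PiM space_N PiE_def)

lemma fun_upd_in_space_PiM_N: "x \<in> space (PiM J (\<lambda>_. N)) \<Longrightarrow> x(i := y) \<in> space (PiM (insert i J) (\<lambda>_. N))"
  by (auto simp: space_PiM_N extensional_def)

lemma poly_weight_measurable[measurable]: "finite J \<Longrightarrow> poly_weight J \<in> borel_measurable (PiM J (\<lambda>_. N))"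
  unfolding poly_weight_def by measurable

lemma integrable_poly_weight: "finite J \<Longrightarrow> integrable (PiM J (\<lambda>_. N)) (poly_weight J)"
  unfolding poly_weight_def
  by (rule product_sigma_finite.product_integrable_prod[OF product_sigma_finite_N]) (auto intro: integrable_weight)

lemma measurable_fun_upd_pair:
  assumes F: "F \<in> borel_measurable (PiM (insert j K) (\<lambda>_. N))"
  shows "(\<lambda>(x, u). F (x(j := u))) \<in> borel_measurable (PiM K (\<lambda>_. N) \<Otimes>\<^sub>M N)"
proof -
  have "(\<lambda>(x, u). x(j := u)) \<in> measurable (PiM K (\<lambda>_. N) \<Otimes>\<^sub>M N) (PiM (insert j K) (\<lambda>_. N))"
    using measurable_add_dim[of j K "\<lambda>_. N"] by simp
  from measurable_comp[OF this F] show ?thesis by (simp add: comp_def case_prod_beta')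
qed

lemma measurable_fun_upd_section:
  assumes F: "F \<in> borel_measurable (PiM (insert j K) (\<lambda>_. N))" and x: "x \<in> space (PiM K (\<lambda>_. N))"
  shows "(\<lambda>u. F (x(j := u))) \<in> borel_measurable N"
proof -
  have "(\<lambda>u. x(j := u)) \<in> measurable N (PiM (insert j K) (\<lambda>_. N))"
    using x by (intro measurable_fun_upd[where J=K]) auto
  from measurable_comp[OF this F] show ?thesis by (simp add: comp_def)
qed

lemma poly_bounded_integrable:
  assumes J: "finite J" and F: "poly_bounded N J C F"
  shows "integrable (PiM J (\<lambda>_. N)) F"
proof (rule Bochner_Integration.integrable_bound[of _ "\<lambda>x. C * poly_weight J x"])
  show "integrable (PiM J (\<lambda>_. N)) (\<lambda>x. C * poly_weight J x)"
    using integrable_poly_weight[OF J] by simp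
  show "F \<in> borel_measurable (PiM J (\<lambda>_. N))"
    using F by (simp add: poly_bounded_def)
  show "AE x in PiM J (\<lambda>_. N). norm (F x) \<le> norm (C * poly_weight J x)"
    using F unfolding poly_bounded_def by (intro AE_I2) (force intro: order_trans[OF _ abs_ge_self])
qed

lemma poly_bounded_const_nonneg:
  assumes J: "finite J" and F: "poly_bounded N J C F"
  shows "0 \<le> C"
proof -
  have "(\<lambda>_\<in>J. 0) \<in> space (PiM J (\<lambda>_. N))"
    by (simp add: space_PiM_N)
  then have "\<bar>F (\<lambda>_\<in>J. 0)\<bar> \<le> C * poly_weight J (\<lambda>_\<in>J. 0)"
    using F by (simp add: poly_bounded_def)
  moreover have "0 < poly_weight J (\<lambda>_\<in>J. 0)"
    by (rule poly_weight_pos[OF J])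
  ultimately show ?thesis
    by (smt (verit) mult_neg_pos)
qed

lemma poly_bounded_section:
  assumes K: "finite K" and F: "poly_bounded N (insert j K) C F" and x: "x \<in> space (PiM K (\<lambda>_. N))"
  shows "\<bar>F (x(j := u))\<bar> \<le> C * (1 + u^4) * poly_weight K x"
    and "integrable N (\<lambda>u. F (x(j := u)))"
proof -
  have Fm: "F \<in> borel_measurable (PiM (insert j K) (\<lambda>_. N))" and Fb: "\<And>x. x \<in> space (PiM (insert j K) (\<lambda>_. N)) \<Longrightarrow> \<bar>F x\<bar> \<le> C * poly_weight (insert j K) x"
    using F by (auto simp: poly_bounded_def)
  have C: "0 \<le> C"
    using K by (intro poly_bounded_const_nonneg[OF _ F]) simp
  have b: "\<bar>F (x(j := u))\<bar> \<le> C * (1 + u^4) * poly_weight K x" for u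
  proof -
    have "\<bar>F (x(j := u))\<bar> \<le> C * poly_weight (insert j K) (x(j := u))" by (rule Fb[OF fun_upd_in_space_PiM_N[OF x]])
    also have "poly_weight (insert j K) (x(j := u)) = (1 + u^4) * poly_weight (K - {j}) x" using K by (intro poly_weight_fun_upd) auto
    also have "C * ((1 + u^4) * poly_weight (K - {j}) x) \<le> C * ((1 + u^4) * poly_weight K x)"
      using C K by (intro mult_left_mono poly_weight_mono) auto
    finally show ?thesis by (simp only: mult.assoc)
  qed
  then show "\<bar>F (x(j := u))\<bar> \<le> C * (1 + u^4) * poly_weight K x" .
  show "integrable N (\<lambda>u. F (x(j := u)))"
  proof (rule Bochner_Integration.integrable_bound[of _ "\<lambda>u. C * poly_weight K x * (1 + u^4)"])
    show "integrable N (\<lambda>u. C * poly_weight K x * (1 + u^4))" using integrable_weight by simp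
    show "(\<lambda>u. F (x(j := u))) \<in> borel_measurable N" by (rule measurable_fun_upd_section[OF Fm x])
    show "AE u in N. norm (F (x(j := u))) \<le> norm (C * poly_weight K x * (1 + u^4))"
    proof (intro AE_I2)
      fix u :: real
      have "0 \<le> C * poly_weight K x * (1 + u^4)" using C poly_weight_pos[OF K, of x] by simp
      moreover have "C * poly_weight K x * (1 + u^4) = C * (1 + u^4) * poly_weight K x" by (simp add: ac_simps)
      ultimately show "norm (F (x(j := u))) \<le> norm (C * poly_weight K x * (1 + u^4))"
        using b[of u] by (simp only: real_norm_def)
    qed
  qed
qed

lemma poly_bounded_integrate_coord:
  assumes K: "finite K" and F: "poly_bounded N (insert j K) C F"
  shows "poly_bounded N K (C * weight_mean) (integrate_coord N j F)"
  unfolding poly_bounded_def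
proof safe
  have Fm: "F \<in> borel_measurable (PiM (insert j K) (\<lambda>_. N))"
    using F by (auto simp: poly_bounded_def)
  show "integrate_coord N j F \<in> borel_measurable (PiM K (\<lambda>_. N))"
    unfolding integrate_coord_def
    by (rule N.borel_measurable_lebesgue_integral) (use measurable_fun_upd_pair[OF Fm] in simp)
  fix x assume x: "x \<in> space (PiM K (\<lambda>_. N))"
  note sec = poly_bounded_section[OF K F x]
  have "\<bar>integrate_coord N j F x\<bar> \<le> (\<integral>u. \<bar>F (x(j := u))\<bar> \<partial>N)"
    unfolding integrate_coord_def by (rule integral_abs_bound)
  also have "\<dots> \<le> (\<integral>u. C * poly_weight K x * (1 + u^4) \<partial>N)"
    using sec(1) integrable_weight sec(2) by (intro integral_mono) (auto simp: ac_simps)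
  also have "\<dots> = C * weight_mean * poly_weight K x"
    by (simp add: weight_mean_def)
  finally show "\<bar>integrate_coord N j F x\<bar> \<le> C * weight_mean * poly_weight K x" .
qed

lemma integrable_weight_pair: "integrable (N \<Otimes>\<^sub>M N) (\<lambda>(u, y). (1 + u^4) * (1 + y^4))"
proof (subst integrable_iff_bounded, safe)
  show "(\<lambda>(u, y). (1 + u^4) * (1 + y^4)) \<in> borel_measurable (N \<Otimes>\<^sub>M N)"
    by (simp add: measurable_cong_sets[OF sets_pair_measure_cong[OF sets_N sets_N] refl])
  have m: "(\<lambda>p. ennreal (norm (case p of (u, y) \<Rightarrow> (1 + u^4) * (1 + y^4)))) \<in> borel_measurable (N \<Otimes>\<^sub>M N)"
    by (simp add: measurable_cong_sets[OF sets_pair_measure_cong[OF sets_N sets_N] refl])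
  have "(\<integral>\<^sup>+p. ennreal (norm (case p of (u, y) \<Rightarrow> (1 + u^4) * (1 + y^4))) \<partial>(N \<Otimes>\<^sub>M N))
     = (\<integral>\<^sup>+u. \<integral>\<^sup>+y. ennreal (1 + u^4) * ennreal (1 + y^4) \<partial>N \<partial>N)"
    by (subst N.nn_integral_fst[OF m, symmetric]) (auto intro!: nn_integral_cong simp: ennreal_mult abs_mult)
  also have "\<dots> = (\<integral>\<^sup>+u. ennreal (1 + u^4) \<partial>N) * (\<integral>\<^sup>+y. ennreal (1 + y^4) \<partial>N)"
    by (simp add: nn_integral_cmult nn_integral_multc measurable_cong_sets[OF sets_N refl])
  also have "\<dots> < \<infinity>"
  proof -
    have "(\<integral>\<^sup>+u. ennreal (1 + u^4) \<partial>N) < \<infinity>"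
      using integrable_weight by (simp add: integrable_iff_bounded)
    then show ?thesis by (simp add: ennreal_mult_less_top)
  qed
  finally show "(\<integral>\<^sup>+p. ennreal (norm (case p of (u, y) \<Rightarrow> (1 + u^4) * (1 + y^4))) \<partial>(N \<Otimes>\<^sub>M N)) < \<infinity>" .
qed

lemma integrate_coord_commute:
  assumes J: "finite J" "i \<notin> J" "j \<in> J" and F: "poly_bounded N (insert i J) C F"
    and x: "x \<in> space (PiM J (\<lambda>_. N))"
  shows "integrate_coord N j (integrate_coord N i F) x = (\<integral>y. integrate_coord N j F (x(i := y)) \<partial>N)"
proof -
  interpret NN: pair_sigma_finite N N
    by (simp add: pair_sigma_finite_def N.sigma_finite_measure_axioms)
  have Fm: "F \<in> borel_measurable (PiM (insert i J) (\<lambda>_. N))"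
    using F by (auto simp: poly_bounded_def)
  have ij: "i \<noteq> j" using J by auto
  define f where "f u y = F (x(j := u, i := y))" for u y
  have fm: "case_prod f \<in> borel_measurable (N \<Otimes>\<^sub>M N)"
  proof -
    have "(\<lambda>p. x(j := fst p, i := snd p)) \<in> measurable (N \<Otimes>\<^sub>M N) (PiM (insert i J) (\<lambda>_. N))"
    proof (rule measurable_fun_upd[where J=J])
      show "(\<lambda>p. x(j := fst p)) \<in> measurable (N \<Otimes>\<^sub>M N) (PiM J (\<lambda>_. N))"
        using x J by (intro measurable_fun_upd[where J=J]) (auto simp: insert_absorb)
    qed auto
    from measurable_comp[OF this Fm] show ?thesis by (simp add: f_def comp_def case_prod_beta')
  qed
  have xj: "x(j := u) \<in> space (PiM J (\<lambda>_. N))" for u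
    using fun_upd_in_space_PiM_N[OF x, of j u] J by (simp add: insert_absorb)
  have C: "0 \<le> C"
    using J by (intro poly_bounded_const_nonneg[OF _ F]) simp
  have fb: "\<bar>f u y\<bar> \<le> C * poly_weight (J - {j}) x * ((1 + u^4) * (1 + y^4))" for u y
  proof -
    have "\<bar>f u y\<bar> \<le> C * (1 + y^4) * poly_weight J (x(j := u))"
      unfolding f_def by (rule poly_bounded_section(1)[OF J(1) F xj])
    also have "poly_weight J (x(j := u)) = (1 + u^4) * poly_weight (J - {j}) x"
      using poly_weight_fun_upd[OF J(1), of j x u] J by (simp add: insert_absorb)
    finally show ?thesis by (simp add: ac_simps)
  qed
  have fi: "integrable (N \<Otimes>\<^sub>M N) (case_prod f)"
  proof (rule Bochner_Integration.integrable_bound[OF _ fm])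
    show "integrable (N \<Otimes>\<^sub>M N) (\<lambda>p. C * poly_weight (J - {j}) x * (case p of (u, y) \<Rightarrow> (1 + u^4) * (1 + y^4)))"
      using integrable_weight_pair by simp
    show "AE p in N \<Otimes>\<^sub>M N. norm (case_prod f p) \<le> norm (C * poly_weight (J - {j}) x * (case p of (u, y) \<Rightarrow> (1 + u^4) * (1 + y^4)))"
    proof (intro AE_I2)
      fix p :: "real \<times> real"
      obtain u y where p: "p = (u, y)" by (cases p)
      have "0 \<le> C * poly_weight (J - {j}) x * ((1 + u^4) * (1 + y^4))"
        using C poly_weight_pos[of "J - {j}" x] J by simp
      then show "norm (case_prod f p) \<le> norm (C * poly_weight (J - {j}) x * (case p of (u, y) \<Rightarrow> (1 + u^4) * (1 + y^4)))"
        using fb[of u y] unfolding p by (simp only: real_norm_def prod.case)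
    qed
  qed
  have "integrate_coord N j (integrate_coord N i F) x = (\<integral>u. \<integral>y. f u y \<partial>N \<partial>N)"
    unfolding integrate_coord_def f_def ..
  also have "\<dots> = (\<integral>y. \<integral>u. f u y \<partial>N \<partial>N)"
    by (rule NN.Fubini_integral[OF fi, symmetric])
  also have "\<dots> = (\<integral>y. integrate_coord N j F (x(i := y)) \<partial>N)"
    unfolding integrate_coord_def f_def using ij by (simp add: fun_upd_twist)
  finally show ?thesis .
qed

lemma efron_stein_step:
  assumes J: "finite J" "i \<notin> J" "j \<in> J" and F: "poly_bounded N (insert i J) C F"
  shows "(\<integral>\<^sup>+x. ennreal ((integrate_coord N i F x - integrate_coord N j (integrate_coord N i F) x)\<^sup>2) \<partial>PiM J (\<lambda>_. N))
         \<le> (\<integral>\<^sup>+z. ennreal ((F z - integrate_coord N j F z)\<^sup>2) \<partial>PiM (insert i J) (\<lambda>_. N))"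
proof -
  have Fm: "F \<in> borel_measurable (PiM (insert i J) (\<lambda>_. N))"
    using F by (auto simp: poly_bounded_def)
  have F': "poly_bounded N (insert j (insert i J)) C F" using F J by (simp add: insert_absorb insert_commute)
  have EjF: "poly_bounded N (insert i J) (C * weight_mean) (integrate_coord N j F)"
    by (rule poly_bounded_integrate_coord[OF _ F']) (use J in simp)
  have EjFm: "integrate_coord N j F \<in> borel_measurable (PiM (insert i J) (\<lambda>_. N))"
    using EjF by (simp add: poly_bounded_def)
  have "(\<integral>\<^sup>+z. ennreal ((F z - integrate_coord N j F z)\<^sup>2) \<partial>PiM (insert i J) (\<lambda>_. N))
      = (\<integral>\<^sup>+x. \<integral>\<^sup>+y. ennreal ((F (x(i := y)) - integrate_coord N j F (x(i := y)))\<^sup>2) \<partial>N \<partial>PiM J (\<lambda>_. N))"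
  proof -
    have "(\<lambda>z. ennreal ((F z - integrate_coord N j F z)\<^sup>2)) \<in> borel_measurable (PiM (insert i J) (\<lambda>_. N))"
      using Fm EjFm by measurable
    then show ?thesis
      using J by (subst product_sigma_finite.product_nn_integral_insert[OF product_sigma_finite_N]) auto
  qed
  also have "\<dots> \<ge> (\<integral>\<^sup>+x. ennreal ((integrate_coord N i F x - integrate_coord N j (integrate_coord N i F) x)\<^sup>2) \<partial>PiM J (\<lambda>_. N))"
  proof (intro nn_integral_mono)
    fix x assume x: "x \<in> space (PiM J (\<lambda>_. N))"
    have i1: "integrable N (\<lambda>y. F (x(i := y)))" by (rule poly_bounded_section(2)[OF J(1) F x])
    have i2: "integrable N (\<lambda>y. integrate_coord N j F (x(i := y)))" by (rule poly_bounded_section(2)[OF J(1) EjF x])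
    have "integrate_coord N i F x - integrate_coord N j (integrate_coord N i F) x = (\<integral>y. F (x(i := y)) \<partial>N) - (\<integral>y. integrate_coord N j F (x(i := y)) \<partial>N)"
    proof -
      have a: "integrate_coord N j (integrate_coord N i F) x = (\<integral>y. integrate_coord N j F (x(i := y)) \<partial>N)" by (rule integrate_coord_commute[OF J F x])
      have b: "integrate_coord N i F x = (\<integral>y. F (x(i := y)) \<partial>N)" by (simp add: integrate_coord_def)
      show ?thesis unfolding a b ..
    qed
    also have "\<dots> = (\<integral>y. F (x(i := y)) - integrate_coord N j F (x(i := y)) \<partial>N)"
      using i1 i2 by simp
    finally have eq: "integrate_coord N i F x - integrate_coord N j (integrate_coord N i F) x = (\<integral>y. F (x(i := y)) - integrate_coord N j F (x(i := y)) \<partial>N)" .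
    have hm: "(\<lambda>y. F (x(i := y)) - integrate_coord N j F (x(i := y))) \<in> borel_measurable N"
      using measurable_fun_upd_section[OF Fm x] measurable_fun_upd_section[OF EjFm x] by measurable
    show "ennreal ((integrate_coord N i F x - integrate_coord N j (integrate_coord N i F) x)\<^sup>2) \<le> (\<integral>\<^sup>+y. ennreal ((F (x(i := y)) - integrate_coord N j F (x(i := y)))\<^sup>2) \<partial>N)"
      unfolding eq by (rule N.sq_expectation_le_nn_integral_sq[OF hm])
  qed
  finally show ?thesis .
qed

lemma nn_integral_sq_dev_split_coord:
  assumes J: "finite J" "i \<notin> J" and F: "poly_bounded N (insert i J) C F"
  shows "(\<integral>\<^sup>+z. ennreal ((F z - c)\<^sup>2) \<partial>PiM (insert i J) (\<lambda>_. N))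
       = (\<integral>\<^sup>+z. ennreal ((F z - integrate_coord N i F z)\<^sup>2) \<partial>PiM (insert i J) (\<lambda>_. N))
         + (\<integral>\<^sup>+x. ennreal ((integrate_coord N i F x - c)\<^sup>2) \<partial>PiM J (\<lambda>_. N))"
proof -
  let ?P = "PiM J (\<lambda>_. N)" and ?P' = "PiM (insert i J) (\<lambda>_. N)"
  define m where "m = integrate_coord N i F"
  have Fm: "F \<in> borel_measurable ?P'"
    using F by (auto simp: poly_bounded_def)
  have mm: "m \<in> borel_measurable ?P"
    using poly_bounded_integrate_coord[OF J(1) F] by (simp add: m_def poly_bounded_def)
  have "(\<integral>\<^sup>+z. ennreal ((F z - c)\<^sup>2) \<partial>?P') = (\<integral>\<^sup>+x. \<integral>\<^sup>+y. ennreal ((F (x(i := y)) - c)\<^sup>2) \<partial>N \<partial>?P)"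
    using J Fm by (subst product_sigma_finite.product_nn_integral_insert[OF product_sigma_finite_N]) auto
  also have "\<dots> = (\<integral>\<^sup>+x. (\<integral>\<^sup>+y. ennreal ((F (x(i := y)) - m x)\<^sup>2) \<partial>N) + ennreal ((m x - c)\<^sup>2) \<partial>?P)"
    unfolding m_def integrate_coord_def
    by (intro nn_integral_cong N.nn_integral_sq_diff_eq[OF measurable_fun_upd_section[OF Fm]])
  also have "\<dots> = (\<integral>\<^sup>+x. \<integral>\<^sup>+y. ennreal ((F (x(i := y)) - m x)\<^sup>2) \<partial>N \<partial>?P) + (\<integral>\<^sup>+x. ennreal ((m x - c)\<^sup>2) \<partial>?P)"
  proof (rule nn_integral_add)
    have "(\<lambda>(x, y). F (x(i := y))) \<in> borel_measurable (?P \<Otimes>\<^sub>M N)"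
      by (rule measurable_fun_upd_pair[OF Fm])
    then have "(\<lambda>(x, y). ennreal ((F (x(i := y)) - m x)\<^sup>2)) \<in> borel_measurable (?P \<Otimes>\<^sub>M N)"
      using mm by measurable
    then show "(\<lambda>x. \<integral>\<^sup>+y. ennreal ((F (x(i := y)) - m x)\<^sup>2) \<partial>N) \<in> borel_measurable ?P"
      by (rule N.borel_measurable_nn_integral)
  qed (use mm in measurable)
  also have "(\<integral>\<^sup>+x. \<integral>\<^sup>+y. ennreal ((F (x(i := y)) - m x)\<^sup>2) \<partial>N \<partial>?P)
      = (\<integral>\<^sup>+z. ennreal ((F z - integrate_coord N i F z)\<^sup>2) \<partial>?P')"
  proof -
    have "integrate_coord N i F \<in> borel_measurable ?P'"
      using poly_bounded_integrate_coord[of "insert i J" i C F] F J by (simp add: poly_bounded_def)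
    then have "(\<lambda>z. ennreal ((F z - integrate_coord N i F z)\<^sup>2)) \<in> borel_measurable ?P'"
      using Fm by measurable
    then show ?thesis
      using J by (subst product_sigma_finite.product_nn_integral_insert[OF product_sigma_finite_N])
        (auto simp: m_def integrate_coord_def)
  qed
  finally show ?thesis by (simp add: m_def)
qed

theorem efron_stein:
  assumes J: "finite J" and F: "poly_bounded N J C F"
  shows "(\<integral>\<^sup>+x. ennreal ((F x - (\<integral>z. F z \<partial>PiM J (\<lambda>_. N)))\<^sup>2) \<partial>PiM J (\<lambda>_. N))
         \<le> (\<Sum>j\<in>J. \<integral>\<^sup>+x. ennreal ((F x - integrate_coord N j F x)\<^sup>2) \<partial>PiM J (\<lambda>_. N))"
  using J F
proof (induction J arbitrary: C F rule: finite_induct)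
  case empty
  show ?case
    by (simp add: PiM_empty nn_integral_count_space_finite lebesgue_integral_count_space_finite)
next
  case (insert i J)
  note J = insert(1,2) and F = insert(4)
  let ?P = "PiM J (\<lambda>_. N)" and ?P' = "PiM (insert i J) (\<lambda>_. N)"
  define m where "m = integrate_coord N i F"
  have mp: "poly_bounded N J (C * weight_mean) m"
    unfolding m_def by (rule poly_bounded_integrate_coord[OF J(1) F])
  have "integrable ?P' F"
    by (rule poly_bounded_integrable[OF _ F]) (use J in simp)
  then have mean: "(\<integral>z. F z \<partial>?P') = (\<integral>x. m x \<partial>?P)"
    unfolding m_def integrate_coord_def
    by (rule product_sigma_finite.product_integral_insert[OF product_sigma_finite_N J])
  have "(\<integral>\<^sup>+z. ennreal ((F z - (\<integral>z. F z \<partial>?P'))\<^sup>2) \<partial>?P')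
      = (\<integral>\<^sup>+z. ennreal ((F z - m z)\<^sup>2) \<partial>?P') + (\<integral>\<^sup>+x. ennreal ((m x - (\<integral>x. m x \<partial>?P))\<^sup>2) \<partial>?P)"
    unfolding mean m_def by (rule nn_integral_sq_dev_split_coord[OF J F])
  also have "(\<integral>\<^sup>+x. ennreal ((m x - (\<integral>x. m x \<partial>?P))\<^sup>2) \<partial>?P)
      \<le> (\<Sum>j\<in>J. \<integral>\<^sup>+x. ennreal ((m x - integrate_coord N j m x)\<^sup>2) \<partial>?P)"
    by (rule insert.IH[OF mp])
  also have "\<dots> \<le> (\<Sum>j\<in>J. \<integral>\<^sup>+z. ennreal ((F z - integrate_coord N j F z)\<^sup>2) \<partial>?P')"
    unfolding m_def by (intro sum_mono) (rule efron_stein_step[OF J(1) J(2) _ F])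
  finally show ?case
    using J by (simp add: m_def add_mono)
qed

end

section \<open>Gaussian Poincare inequality\<close>

lemma integrable_normal_power:
  assumes s: "\<sigma> > 0"
  shows "integrable (density lborel (normal_density 0 \<sigma>)) (\<lambda>x::real. x ^ k)"
proof (subst integrable_density)
  show "integrable lborel (\<lambda>x. normal_density 0 \<sigma> x *\<^sub>R x ^ k)"
    using integrable_normal_moment[where \<mu>=0 and \<sigma>=\<sigma> and k=k] s by simp
qed auto

lemma fourth_moment_measure_normal:
  assumes s: "\<sigma> > 0"
  shows "fourth_moment_measure (density lborel (normal_density 0 \<sigma>))"
proof (rule fourth_moment_measure.intro)
  show "prob_space (density lborel (normal_density 0 \<sigma>))" by (rule prob_space_normal_density[OF s])
  show "integrable (density lborel (normal_density 0 \<sigma>)) (\<lambda>t. 1 + t^4)"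
    using integrable_normal_power[OF s, of 4]
      finite_measure.integrable_const[OF prob_space.finite_measure[OF prob_space_normal_density[where \<mu>=0, OF s]]]
    by (auto intro!: Bochner_Integration.integrable_add)
qed simp_all

locale gaussian_coords =
  fixes \<sigma> :: real
  assumes s: "\<sigma> > 0"
begin

abbreviation "N \<equiv> density lborel (normal_density 0 \<sigma>)"

sublocale fourth_moment_measure N by (rule fourth_moment_measure_normal[OF s])

interpretation N: prob_space N by (rule prob)

lemma gaussian_poincare_coord:
  assumes J: "finite J" and j: "j \<in> J" and F: "poly_bounded N J C F"
    and der: "\<And>x t. x \<in> space (PiM J (\<lambda>_. N)) \<Longrightarrow>
                 ((\<lambda>u. F (x(j := u))) has_real_derivative D (x(j := t))) (at t)"
    and cont: "\<And>x. x \<in> space (PiM J (\<lambda>_. N)) \<Longrightarrow> continuous_on UNIV (\<lambda>u. D (x(j := u)))"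
    and Dm: "D \<in> borel_measurable (PiM J (\<lambda>_. N))"
  shows "(\<integral>\<^sup>+x. ennreal ((F x - integrate_coord N j F x)\<^sup>2) \<partial>PiM J (\<lambda>_. N))
        \<le> ennreal (\<sigma>\<^sup>2) * (\<integral>\<^sup>+x. ennreal ((D x)\<^sup>2) \<partial>PiM J (\<lambda>_. N))"
proof -
  have Fm: "F \<in> borel_measurable (PiM J (\<lambda>_. N))" using F by (simp add: poly_bounded_def)
  define K where "K = J - {j}"
  have JK: "J = insert j K" "j \<notin> K" "finite K" using j J by (auto simp: K_def)
  have F': "poly_bounded N (insert j J) C F" using F j by (simp add: insert_absorb)
  have EjFm: "integrate_coord N j F \<in> borel_measurable (PiM J (\<lambda>_. N))"
    using poly_bounded_integrate_coord[OF J F'] by (simp add: poly_bounded_def)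
  have m1: "(\<lambda>z. ennreal ((F z - integrate_coord N j F z)\<^sup>2)) \<in> borel_measurable (PiM (insert j K) (\<lambda>_. N))"
    using Fm EjFm JK(1) by simp
  have m2: "(\<lambda>z. ennreal ((D z)\<^sup>2)) \<in> borel_measurable (PiM (insert j K) (\<lambda>_. N))"
    using Dm JK(1) by simp
  have "(\<integral>\<^sup>+x. ennreal ((F x - integrate_coord N j F x)\<^sup>2) \<partial>PiM J (\<lambda>_. N))
     = (\<integral>\<^sup>+x. \<integral>\<^sup>+y. ennreal ((F (x(j := y)) - integrate_coord N j F (x(j := y)))\<^sup>2) \<partial>N \<partial>PiM K (\<lambda>_. N))"
    unfolding JK(1) by (rule product_sigma_finite.product_nn_integral_insert[OF product_sigma_finite_N JK(3) JK(2) m1])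
  also have "\<dots> \<le> (\<integral>\<^sup>+x. ennreal (\<sigma>\<^sup>2) * \<integral>\<^sup>+y. ennreal ((D (x(j := y)))\<^sup>2) \<partial>N \<partial>PiM K (\<lambda>_. N))"
  proof (intro nn_integral_mono)
    fix x assume x: "x \<in> space (PiM K (\<lambda>_. N))"
    have x0: "x(j := 0) \<in> space (PiM J (\<lambda>_. N))" using fun_upd_in_space_PiM_N[OF x] JK(1) by simp
    have d: "((\<lambda>u. F (x(j := u))) has_real_derivative D (x(j := t))) (at t)" for t
      using der[OF x0, of t] by simp
    have c: "continuous_on UNIV (\<lambda>u. D (x(j := u)))"
      using cont[OF x0] by simp
    show "(\<integral>\<^sup>+y. ennreal ((F (x(j := y)) - integrate_coord N j F (x(j := y)))\<^sup>2) \<partial>N)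
        \<le> ennreal (\<sigma>\<^sup>2) * (\<integral>\<^sup>+y. ennreal ((D (x(j := y)))\<^sup>2) \<partial>N)"
      using gaussian_poincare_1d[OF s d c] by (simp add: integrate_coord_def)
  qed
  also have "\<dots> = ennreal (\<sigma>\<^sup>2) * (\<integral>\<^sup>+x. \<integral>\<^sup>+y. ennreal ((D (x(j := y)))\<^sup>2) \<partial>N \<partial>PiM K (\<lambda>_. N))"
  proof (rule nn_integral_cmult)
    have "(\<lambda>(x, y). ennreal ((D (x(j := y)))\<^sup>2)) \<in> borel_measurable (PiM K (\<lambda>_. N) \<Otimes>\<^sub>M N)"
    proof -
      have "(\<lambda>(x, y). D (x(j := y))) \<in> borel_measurable (PiM K (\<lambda>_. N) \<Otimes>\<^sub>M N)"
        by (rule measurable_fun_upd_pair) (use Dm JK(1) in simp)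
      then show ?thesis by measurable
    qed
    then show "(\<lambda>x. \<integral>\<^sup>+y. ennreal ((D (x(j := y)))\<^sup>2) \<partial>N) \<in> borel_measurable (PiM K (\<lambda>_. N))"
      by (rule N.borel_measurable_nn_integral)
  qed
  also have "(\<integral>\<^sup>+x. \<integral>\<^sup>+y. ennreal ((D (x(j := y)))\<^sup>2) \<partial>N \<partial>PiM K (\<lambda>_. N)) = (\<integral>\<^sup>+x. ennreal ((D x)\<^sup>2) \<partial>PiM J (\<lambda>_. N))"
    unfolding JK(1) by (rule product_sigma_finite.product_nn_integral_insert[OF product_sigma_finite_N JK(3) JK(2) m2, symmetric])
  finally show ?thesis .
qed

theorem gaussian_poincare:
  assumes J: "finite J" and F: "poly_bounded N J C F"
    and der: "\<And>j x t. j \<in> J \<Longrightarrow> x \<in> space (PiM J (\<lambda>_. N)) \<Longrightarrow>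
                 ((\<lambda>u. F (x(j := u))) has_real_derivative D j (x(j := t))) (at t)"
    and cont: "\<And>j x. j \<in> J \<Longrightarrow> x \<in> space (PiM J (\<lambda>_. N)) \<Longrightarrow> continuous_on UNIV (\<lambda>u. D j (x(j := u)))"
    and Dm: "\<And>j. j \<in> J \<Longrightarrow> D j \<in> borel_measurable (PiM J (\<lambda>_. N))"
  shows "(\<integral>\<^sup>+x. ennreal ((F x - (\<integral>z. F z \<partial>PiM J (\<lambda>_. N)))\<^sup>2) \<partial>PiM J (\<lambda>_. N))
         \<le> ennreal (\<sigma>\<^sup>2) * (\<integral>\<^sup>+x. ennreal (\<Sum>j\<in>J. (D j x)\<^sup>2) \<partial>PiM J (\<lambda>_. N))"
proof -
  have "(\<integral>\<^sup>+x. ennreal ((F x - (\<integral>z. F z \<partial>PiM J (\<lambda>_. N)))\<^sup>2) \<partial>PiM J (\<lambda>_. N))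
        \<le> (\<Sum>j\<in>J. \<integral>\<^sup>+x. ennreal ((F x - integrate_coord N j F x)\<^sup>2) \<partial>PiM J (\<lambda>_. N))"
    by (rule efron_stein[OF J F])
  also have "\<dots> \<le> (\<Sum>j\<in>J. ennreal (\<sigma>\<^sup>2) * (\<integral>\<^sup>+x. ennreal ((D j x)\<^sup>2) \<partial>PiM J (\<lambda>_. N)))"
    by (intro sum_mono gaussian_poincare_coord[OF J _ F]) (simp_all add: der cont Dm)
  also have "\<dots> = ennreal (\<sigma>\<^sup>2) * (\<integral>\<^sup>+x. (\<Sum>j\<in>J. ennreal ((D j x)\<^sup>2)) \<partial>PiM J (\<lambda>_. N))"
    using Dm by (subst nn_integral_sum) (auto simp: sum_distrib_left)
  also have "\<dots> = ennreal (\<sigma>\<^sup>2) * (\<integral>\<^sup>+x. ennreal (\<Sum>j\<in>J. (D j x)\<^sup>2) \<partial>PiM J (\<lambda>_. N))"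
    by (simp add: sum_ennreal)
  finally show ?thesis .
qed

end

section \<open>Log-partition function of Gaussian energies\<close>

definition log_partition :: "'i set \<Rightarrow> ('i \<Rightarrow> real) \<Rightarrow> real" where
  "log_partition J x = ln (\<Sum>k\<in>J. exp (- x k))"

definition gibbs_weight :: "'i set \<Rightarrow> 'i \<Rightarrow> ('i \<Rightarrow> real) \<Rightarrow> real" where
  "gibbs_weight J j x = exp (- x j) / (\<Sum>k\<in>J. exp (- x k))"

lemma sum_exp_neg_pos: "finite J \<Longrightarrow> J \<noteq> {} \<Longrightarrow> 0 < (\<Sum>k\<in>J. exp (- x k :: real))"
  by (intro sum_pos) auto

lemma sum_exp_neg_fun_upd: "finite J \<Longrightarrow> j \<in> J \<Longrightarrow>
   (\<Sum>k\<in>J. exp (- (x(j := u)) k)) = exp (- u) + (\<Sum>k\<in>J - {j}. exp (- x k :: real))"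
  by (simp add: sum.remove)

lemma log_partition_coord_has_derivative:
  assumes J: "finite J" "j \<in> J"
  shows "((\<lambda>u. log_partition J (x(j := u))) has_real_derivative - gibbs_weight J j (x(j := t))) (at t)"
proof -
  define R where "R = (\<Sum>k\<in>J - {j}. exp (- x k))"
  have R: "0 \<le> R" unfolding R_def by (intro sum_nonneg) auto
  have su: "\<And>u. (\<Sum>k\<in>J. exp (- (x(j := u)) k)) = exp (- u) + R"
    unfolding R_def by (rule sum_exp_neg_fun_upd[OF J])
  have eq: "(\<lambda>u. log_partition J (x(j := u))) = (\<lambda>u. ln (exp (- u) + R))"
    unfolding log_partition_def su ..
  have pos: "0 < exp (- t) + R" using R by (simp add: add_pos_nonneg)
  have "((\<lambda>u. ln (exp (- u) + R)) has_real_derivative (1 / (exp (- t) + R)) * (exp (- t) * (- 1) + 0)) (at t)"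
    by (intro derivative_eq_intros DERIV_ln_divide refl) (use pos in auto)
  moreover have "gibbs_weight J j (x(j := t)) = exp (- t) / (exp (- t) + R)"
    unfolding gibbs_weight_def su by simp
  ultimately show ?thesis unfolding eq by (simp add: field_simps)
qed

lemma continuous_on_gibbs_weight_coord:
  assumes J: "finite J" "j \<in> J"
  shows "continuous_on UNIV (\<lambda>u. gibbs_weight J j (x(j := u)))"
proof -
  define R where "R = (\<Sum>k\<in>J - {j}. exp (- x k))"
  have R: "0 \<le> R" unfolding R_def by (intro sum_nonneg) auto
  have su: "\<And>u. (\<Sum>k\<in>J. exp (- (x(j := u)) k)) = exp (- u) + R"
    unfolding R_def by (rule sum_exp_neg_fun_upd[OF J])
  have eq: "(\<lambda>u. gibbs_weight J j (x(j := u))) = (\<lambda>u. exp (- u) / (exp (- u) + R))"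
    unfolding gibbs_weight_def su by simp
  show ?thesis unfolding eq
    using R by (intro continuous_intros) (auto simp: add_pos_nonneg dual_order.strict_implies_not_eq)
qed

lemma continuous_on_log_partition_coord:
  assumes J: "finite J" "j \<in> J"
  shows "continuous_on UNIV (\<lambda>u. log_partition J (x(j := u)))"
  using log_partition_coord_has_derivative[OF J] by (intro DERIV_continuous_on) auto

lemma gibbs_weight_nonneg: "0 \<le> gibbs_weight J j x"
  unfolding gibbs_weight_def by (intro divide_nonneg_nonneg sum_nonneg) auto

lemma sum_gibbs_weight: "finite J \<Longrightarrow> J \<noteq> {} \<Longrightarrow> (\<Sum>j\<in>J. gibbs_weight J j x) = 1"
  unfolding gibbs_weight_def using sum_exp_neg_pos[of J x] by (simp add: sum_divide_distrib[symmetric])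

lemma sum_gibbs_weight_sq_le_1: "finite J \<Longrightarrow> J \<noteq> {} \<Longrightarrow> (\<Sum>j\<in>J. (gibbs_weight J j x)\<^sup>2) \<le> 1"
proof -
  assume J: "finite J" "J \<noteq> {}"
  have le1: "gibbs_weight J j x \<le> 1" if "j \<in> J" for j
  proof -
    have "gibbs_weight J j x \<le> (\<Sum>j\<in>J. gibbs_weight J j x)"
      using J that by (intro member_le_sum gibbs_weight_nonneg) auto
    then show ?thesis using sum_gibbs_weight[OF J] by simp
  qed
  have "(\<Sum>j\<in>J. (gibbs_weight J j x)\<^sup>2) \<le> (\<Sum>j\<in>J. gibbs_weight J j x)"
  proof (intro sum_mono)
    fix j assume "j \<in> J"
    then show "(gibbs_weight J j x)\<^sup>2 \<le> gibbs_weight J j x"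
      using le1 gibbs_weight_nonneg[of J j x] by (simp add: power2_eq_square mult_left_le)
  qed
  then show ?thesis using sum_gibbs_weight[OF J] by simp
qed

lemma abs_log_partition_le:
  assumes J: "finite J" "J \<noteq> {}"
  shows "\<bar>log_partition J x\<bar> \<le> ln (card J) + (\<Sum>k\<in>J. \<bar>x k\<bar>)"
proof -
  define S where "S = (\<Sum>k\<in>J. \<bar>x k\<bar>)"
  have Spos: "0 < (\<Sum>k\<in>J. exp (- x k))" by (rule sum_exp_neg_pos[OF J])
  have up: "(\<Sum>k\<in>J. exp (- x k)) \<le> card J * exp S"
  proof -
    have "(\<Sum>k\<in>J. exp (- x k)) \<le> (\<Sum>k\<in>J. exp S)"
    proof (intro sum_mono)
      fix k assume k: "k \<in> J"
      have "- x k \<le> \<bar>x k\<bar>" by simp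
      also have "\<bar>x k\<bar> \<le> S" unfolding S_def using J k by (intro member_le_sum) auto
      finally show "exp (- x k) \<le> exp S" by simp
    qed
    then show ?thesis by simp
  qed
  obtain k0 where k0: "k0 \<in> J" using J by auto
  have lo: "exp (- S) \<le> (\<Sum>k\<in>J. exp (- x k))"
  proof -
    have "x k0 \<le> \<bar>x k0\<bar>" by simp
    also have "\<bar>x k0\<bar> \<le> S" unfolding S_def using J k0 by (intro member_le_sum) auto
    finally have "exp (- S) \<le> exp (- x k0)" by simp
    also have "\<dots> \<le> (\<Sum>k\<in>J. exp (- x k))" using J k0 by (intro member_le_sum) auto
    finally show ?thesis .
  qed
  have c: "0 < real (card J)" using J by (simp add: card_gt_0_iff)
  have "log_partition J x \<le> ln (card J * exp S)"
    unfolding log_partition_def using up Spos by (subst ln_le_cancel_iff) auto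
  also have "\<dots> = ln (card J) + S" using c by (simp add: ln_mult)
  finally have a: "log_partition J x \<le> ln (card J) + S" .
  have "- S \<le> log_partition J x"
    unfolding log_partition_def using lo Spos by (subst ln_ge_iff) auto
  moreover have "0 \<le> ln (card J)" using c by (simp add: card_gt_0_iff) (use J in \<open>simp add: Suc_le_eq card_gt_0_iff\<close>)
  ultimately show ?thesis using a by (simp add: S_def abs_le_iff)
qed

lemma abs_le_1_plus_power4: "\<bar>t::real\<bar> \<le> 1 + t^4"
proof (cases "\<bar>t\<bar> \<le> 1")
  case True
  have "0 \<le> t^4" by (simp add: zero_le_even_power)
  then show ?thesis using True by linarith
next
  case False
  then have "\<bar>t\<bar> \<le> \<bar>t\<bar>^4" by (simp add: power_increasing[of 1 4 "\<bar>t\<bar>", simplified])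
  then show ?thesis by (simp add: power_abs)
qed

lemma sq_le_1_plus_power4: "(t::real)\<^sup>2 \<le> 1 + t^4"
proof -
  have "0 \<le> (t\<^sup>2 - 1)\<^sup>2 + t\<^sup>2" by simp
  then show ?thesis by (simp add: power2_eq_square algebra_simps power4_eq_xxxx)
qed

lemma one_plus_power4_le_poly_weight: assumes "finite J" "k \<in> J" shows "1 + (x k)^4 \<le> poly_weight J x"
proof -
  have p: "1 \<le> (\<Prod>j\<in>J - {k}. 1 + (x j)^4)" by (intro prod_ge_1) auto
  have "(1 + (x k)^4) * 1 \<le> (1 + (x k)^4) * (\<Prod>j\<in>J - {k}. 1 + (x j)^4)"
    by (rule mult_left_mono[OF p]) simp
  also have "\<dots> = poly_weight J x" unfolding poly_weight_def using assms by (simp add: prod.remove)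
  finally show ?thesis by simp
qed

lemma abs_log_partition_le_poly_weight:
  assumes J: "finite J" "J \<noteq> {}"
  shows "\<bar>log_partition J x\<bar> \<le> 2 * card J * poly_weight J x"
proof -
  have "\<bar>log_partition J x\<bar> \<le> ln (card J) + (\<Sum>k\<in>J. \<bar>x k\<bar>)" by (rule abs_log_partition_le[OF J])
  also have "ln (card J) \<le> card J * poly_weight J x"
  proof -
    have c: "0 < real (card J)" using J by (simp add: card_gt_0_iff)
    have "ln (card J) \<le> real (card J) - 1" using ln_le_minus_one[OF c] .
    also have "\<dots> \<le> real (card J) * 1" by simp
    also have "\<dots> \<le> card J * poly_weight J x" using poly_weight_ge_1[OF J(1)] by (intro mult_left_mono) auto
    finally show ?thesis .
  qed
  also have "(\<Sum>k\<in>J. \<bar>x k\<bar>) \<le> (\<Sum>k\<in>J. poly_weight J x)"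
    by (intro sum_mono order_trans[OF abs_le_1_plus_power4 one_plus_power4_le_poly_weight[OF J(1)]])
  finally show ?thesis by simp
qed

lemma log_partition_sq_le_poly_weight:
  assumes J: "finite J" "J \<noteq> {}"
  shows "(log_partition J x)\<^sup>2 \<le> 4 * (card J)\<^sup>2 * poly_weight J x"
proof -
  define d where "d = real (card J)"
  have c: "1 \<le> d" using J by (simp add: d_def Suc_le_eq card_gt_0_iff)
  have w: "1 \<le> poly_weight J x" by (rule poly_weight_ge_1[OF J(1)])
  have a: "\<bar>log_partition J x\<bar> \<le> ln d + (\<Sum>k\<in>J. \<bar>x k\<bar>)" unfolding d_def by (rule abs_log_partition_le[OF J])
  have l0: "0 \<le> ln d" using c by simp
  have l1: "ln d \<le> d" using c ln_le_minus_one[of d] by simp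
  define S where "S = (\<Sum>k\<in>J. \<bar>x k\<bar>)"
  have S0: "0 \<le> S" unfolding S_def by (intro sum_nonneg) auto
  have e1: "(log_partition J x)\<^sup>2 \<le> (ln d + S)\<^sup>2"
  proof -
    have "(log_partition J x)\<^sup>2 = \<bar>log_partition J x\<bar>\<^sup>2" by simp
    also have "\<dots> \<le> (ln d + S)\<^sup>2" using a unfolding S_def by (intro power_mono) auto
    finally show ?thesis .
  qed
  have e2: "(ln d + S)\<^sup>2 \<le> 2 * (ln d)\<^sup>2 + 2 * S\<^sup>2"
  proof -
    have "0 \<le> (ln d - S)\<^sup>2" by simp
    then show ?thesis by (simp add: power2_eq_square algebra_simps)
  qed
  have e3: "S\<^sup>2 \<le> (\<Sum>k\<in>J. \<bar>x k\<bar>\<^sup>2) * d"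
    unfolding d_def S_def by (rule sum_squared_le_sum_of_squares)
  have e4: "(\<Sum>k\<in>J. \<bar>x k\<bar>\<^sup>2) \<le> d * poly_weight J x"
  proof -
    have "(\<Sum>k\<in>J. \<bar>x k\<bar>\<^sup>2) \<le> (\<Sum>k\<in>J. poly_weight J x)"
    proof (intro sum_mono)
      fix k assume k: "k \<in> J"
      have "\<bar>x k\<bar>\<^sup>2 \<le> 1 + (x k)^4" using sq_le_1_plus_power4[of "x k"] by simp
      also have "\<dots> \<le> poly_weight J x" by (rule one_plus_power4_le_poly_weight[OF J(1) k])
      finally show "\<bar>x k\<bar>\<^sup>2 \<le> poly_weight J x" .
    qed
    then show ?thesis by (simp add: d_def)
  qed
  have e5: "(ln d)\<^sup>2 \<le> d\<^sup>2" using l0 l1 by (intro power_mono) auto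
  have e6: "S\<^sup>2 \<le> d * poly_weight J x * d" using e3 e4 c by (meson mult_right_mono order_trans zero_le_one order_trans[OF zero_le_one c])
  have e7: "d\<^sup>2 \<le> d\<^sup>2 * poly_weight J x" using w by (simp add: mult_le_cancel_left1)
  have "(log_partition J x)\<^sup>2 \<le> 2 * d\<^sup>2 * poly_weight J x + 2 * (d * poly_weight J x * d)"
    using e1 e2 e5 e6 e7 by linarith
  also have "\<dots> = 4 * d\<^sup>2 * poly_weight J x" by (simp add: power2_eq_square)
  finally show ?thesis by (simp add: d_def)
qed

context fourth_moment_measure begin

lemma log_partition_measurable[measurable]: "finite J \<Longrightarrow> log_partition J \<in> borel_measurable (PiM J (\<lambda>_. N))"
  unfolding log_partition_def by measurable

lemma gibbs_weight_measurable[measurable]: "finite J \<Longrightarrow> j \<in> J \<Longrightarrow> gibbs_weight J j \<in> borel_measurable (PiM J (\<lambda>_. N))"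
  unfolding gibbs_weight_def by measurable

end

context gaussian_coords begin

lemma poly_bounded_log_partition: "finite J \<Longrightarrow> J \<noteq> {} \<Longrightarrow> poly_bounded N J (2 * card J) (log_partition J)"
  unfolding poly_bounded_def using abs_log_partition_le_poly_weight by auto

theorem log_partition_variance_le:
  assumes J: "finite J" "J \<noteq> {}"
  shows "(\<integral>\<^sup>+x. ennreal ((log_partition J x - (\<integral>z. log_partition J z \<partial>PiM J (\<lambda>_. N)))\<^sup>2) \<partial>PiM J (\<lambda>_. N)) \<le> ennreal (\<sigma>\<^sup>2)"
proof -
  interpret P: prob_space "PiM J (\<lambda>_. N)" by (rule prob_space_PiM_N)
  have "(\<integral>\<^sup>+x. ennreal ((log_partition J x - (\<integral>z. log_partition J z \<partial>PiM J (\<lambda>_. N)))\<^sup>2) \<partial>PiM J (\<lambda>_. N))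
      \<le> ennreal (\<sigma>\<^sup>2) * (\<integral>\<^sup>+x. ennreal (\<Sum>j\<in>J. (- gibbs_weight J j x)\<^sup>2) \<partial>PiM J (\<lambda>_. N))"
  proof (rule gaussian_poincare[OF J(1) poly_bounded_log_partition[OF J]])
    show "((\<lambda>u. log_partition J (x(j := u))) has_real_derivative - gibbs_weight J j (x(j := t))) (at t)" if "j \<in> J" for j x t
      by (rule log_partition_coord_has_derivative[OF J(1) that])
    show "continuous_on UNIV (\<lambda>u. - gibbs_weight J j (x(j := u)))" if "j \<in> J" for j x
      by (intro continuous_on_minus continuous_on_gibbs_weight_coord[OF J(1) that])
    show "(\<lambda>x. - gibbs_weight J j x) \<in> borel_measurable (PiM J (\<lambda>_. N))" if "j \<in> J" for j
      using gibbs_weight_measurable[OF J(1) that] by measurable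
  qed
  also have "\<dots> \<le> ennreal (\<sigma>\<^sup>2) * (\<integral>\<^sup>+x. 1 \<partial>PiM J (\<lambda>_. N))"
    by (intro mult_left_mono nn_integral_mono) (use sum_gibbs_weight_sq_le_1[OF J] in auto)
  also have "\<dots> = ennreal (\<sigma>\<^sup>2)" by (simp add: P.emeasure_space_1)
  finally show ?thesis .
qed

lemma poly_bounded_log_partition_sq_dev:
  assumes J: "finite J" "J \<noteq> {}"
  shows "poly_bounded N J (8 * (real (card J))\<^sup>2 + 2 * m\<^sup>2) (\<lambda>x. (log_partition J x - m)\<^sup>2)"
  unfolding poly_bounded_def
proof safe
  show "(\<lambda>x. (log_partition J x - m)\<^sup>2) \<in> borel_measurable (PiM J (\<lambda>_. N))"
    using log_partition_measurable[OF J(1)] by measurable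
  fix x
  have w: "1 \<le> poly_weight J x" by (rule poly_weight_ge_1[OF J(1)])
  have "(log_partition J x - m)\<^sup>2 \<le> 2 * (log_partition J x)\<^sup>2 + 2 * m\<^sup>2"
  proof -
    have "0 \<le> (log_partition J x + m)\<^sup>2" by simp
    then show ?thesis by (simp add: power2_eq_square algebra_simps)
  qed
  also have "\<dots> \<le> 8 * (real (card J))\<^sup>2 * poly_weight J x + 2 * m\<^sup>2 * poly_weight J x"
    using log_partition_sq_le_poly_weight[OF J, of x] mult_left_mono[OF w, of "2 * m\<^sup>2"] by simp
  finally show "\<bar>(log_partition J x - m)\<^sup>2\<bar> \<le> (8 * (real (card J))\<^sup>2 + 2 * m\<^sup>2) * poly_weight J x"
    by (simp add: distrib_right)
qed

lemma log_partition_sq_dev_variance_le: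
  assumes J: "finite J" "J \<noteq> {}"
  defines "m \<equiv> \<integral>z. log_partition J z \<partial>PiM J (\<lambda>_. N)"
  defines "G \<equiv> \<lambda>x. (log_partition J x - m)\<^sup>2"
  shows "(\<integral>\<^sup>+x. ennreal ((G x - (\<integral>z. G z \<partial>PiM J (\<lambda>_. N)))\<^sup>2) \<partial>PiM J (\<lambda>_. N)) \<le> ennreal (4 * \<sigma>^4)"
proof -
  define D where "D j x = 2 * (log_partition J x - m) * (- gibbs_weight J j x)" for j x
  have "(\<integral>\<^sup>+x. ennreal ((G x - (\<integral>z. G z \<partial>PiM J (\<lambda>_. N)))\<^sup>2) \<partial>PiM J (\<lambda>_. N))
      \<le> ennreal (\<sigma>\<^sup>2) * (\<integral>\<^sup>+x. ennreal (\<Sum>j\<in>J. (D j x)\<^sup>2) \<partial>PiM J (\<lambda>_. N))"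
    unfolding G_def
  proof (rule gaussian_poincare[OF J(1) poly_bounded_log_partition_sq_dev[OF J]])
    show "((\<lambda>u. (log_partition J (x(j := u)) - m)\<^sup>2) has_real_derivative D j (x(j := t))) (at t)"
      if "j \<in> J" for j x t
      using DERIV_power[OF DERIV_diff[OF log_partition_coord_has_derivative[OF J(1) that] DERIV_const], where n=2]
      by (simp add: D_def algebra_simps)
    show "continuous_on UNIV (\<lambda>u. D j (x(j := u)))" if "j \<in> J" for j x
      unfolding D_def
      by (intro continuous_intros continuous_on_log_partition_coord[OF J(1) that]
          continuous_on_gibbs_weight_coord[OF J(1) that])
    show "D j \<in> borel_measurable (PiM J (\<lambda>_. N))" if "j \<in> J" for j
      unfolding D_def using gibbs_weight_measurable[OF J(1) that] log_partition_measurable[OF J(1)] by measurable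
  qed
  also have "\<dots> \<le> ennreal (\<sigma>\<^sup>2) * (\<integral>\<^sup>+x. ennreal (4 * (log_partition J x - m)\<^sup>2) \<partial>PiM J (\<lambda>_. N))"
  proof (intro mult_left_mono nn_integral_mono)
    fix x
    have "(\<Sum>j\<in>J. (D j x)\<^sup>2) = 4 * (log_partition J x - m)\<^sup>2 * (\<Sum>j\<in>J. (gibbs_weight J j x)\<^sup>2)"
      unfolding sum_distrib_left
      by (intro sum.cong refl) (simp add: D_def power_mult_distrib power2_eq_square algebra_simps)
    also have "\<dots> \<le> 4 * (log_partition J x - m)\<^sup>2"
      using mult_left_mono[OF sum_gibbs_weight_sq_le_1[OF J], of "4 * (log_partition J x - m)\<^sup>2"] by simp
    finally show "ennreal (\<Sum>j\<in>J. (D j x)\<^sup>2) \<le> ennreal (4 * (log_partition J x - m)\<^sup>2)"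
      by (rule ennreal_leI)
  qed simp
  also have "\<dots> = ennreal (\<sigma>\<^sup>2) * ennreal 4 * (\<integral>\<^sup>+x. ennreal ((log_partition J x - m)\<^sup>2) \<partial>PiM J (\<lambda>_. N))"
    using log_partition_measurable[OF J(1)] by (simp add: ennreal_mult nn_integral_cmult mult.assoc)
  also have "\<dots> \<le> ennreal (\<sigma>\<^sup>2) * ennreal 4 * ennreal (\<sigma>\<^sup>2)"
    unfolding m_def by (intro mult_left_mono log_partition_variance_le[OF J]) auto
  also have "\<dots> = ennreal (\<sigma>\<^sup>2 * 4 * \<sigma>\<^sup>2)"
    by (simp add: ennreal_mult)
  also have "\<dots> = ennreal (4 * \<sigma>^4)"
    by (simp add: power2_eq_square power4_eq_xxxx mult_ac)
  finally show ?thesis .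
qed

theorem log_partition_fourth_moment_le:
  assumes J: "finite J" "J \<noteq> {}"
  shows "(\<integral>\<^sup>+x. ennreal ((log_partition J x - (\<integral>z. log_partition J z \<partial>PiM J (\<lambda>_. N)))^4) \<partial>PiM J (\<lambda>_. N))
    \<le> ennreal (5 * \<sigma>^4)"
proof -
  define m where "m = (\<integral>z. log_partition J z \<partial>PiM J (\<lambda>_. N))"
  define G where "G x = (log_partition J x - m)\<^sup>2" for x
  define EG where "EG = (\<integral>z. G z \<partial>PiM J (\<lambda>_. N))"
  have Gp: "poly_bounded N J (8 * (real (card J))\<^sup>2 + 2 * m\<^sup>2) G"
    unfolding G_def by (rule poly_bounded_log_partition_sq_dev[OF J])
  have "ennreal EG = (\<integral>\<^sup>+x. ennreal (G x) \<partial>PiM J (\<lambda>_. N))"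
    unfolding EG_def by (rule nn_integral_eq_integral[symmetric, OF poly_bounded_integrable[OF J(1) Gp]])
      (simp add: G_def)
  also have "\<dots> \<le> ennreal (\<sigma>\<^sup>2)"
    using log_partition_variance_le[OF J] by (simp add: G_def m_def)
  finally have "EG \<le> \<sigma>\<^sup>2" by (simp add: ennreal_le_iff)
  moreover have "0 \<le> EG"
    unfolding EG_def G_def by (intro integral_nonneg_AE) auto
  ultimately have EG_sq: "EG\<^sup>2 \<le> \<sigma>^4"
    using power_mono[of EG "\<sigma>\<^sup>2" 2] by (simp add: power_mult[symmetric])
  have "(\<integral>\<^sup>+x. ennreal ((log_partition J x - m)^4) \<partial>PiM J (\<lambda>_. N)) = (\<integral>\<^sup>+x. ennreal ((G x - 0)\<^sup>2) \<partial>PiM J (\<lambda>_. N))"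
    by (intro nn_integral_cong) (simp add: G_def power_mult[symmetric])
  also have "\<dots> = (\<integral>\<^sup>+x. ennreal ((G x - EG)\<^sup>2) \<partial>PiM J (\<lambda>_. N)) + ennreal ((EG - 0)\<^sup>2)"
    unfolding EG_def using Gp by (intro prob_space.nn_integral_sq_diff_eq[OF prob_space_PiM_N]) (simp add: poly_bounded_def)
  also have "\<dots> \<le> ennreal (4 * \<sigma>^4) + ennreal (\<sigma>^4)"
    unfolding EG_def G_def m_def
    by (intro add_mono log_partition_sq_dev_variance_le[OF J] ennreal_leI) (use EG_sq in \<open>simp add: EG_def G_def m_def\<close>)
  also have "\<dots> = ennreal (5 * \<sigma>^4)" by (simp add: ennreal_plus[symmetric])
  finally show ?thesis by (simp add: m_def)
qed

end

lemma distr_lborel_eq_distr_borel: "distr M lborel f = distr M borel f"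
  unfolding distr_def by simp

lemma sets_PiM_normal: "sets (PiM K (\<lambda>_. density lborel (normal_density 0 s))) = sets (PiM K (\<lambda>_. borel))"
  by (intro sets_PiM_cong) auto

lemma log_partition_measurable_borel: "finite K \<Longrightarrow> log_partition K \<in> borel_measurable (PiM K (\<lambda>_. borel))"
  unfolding log_partition_def by measurable

lemma log_partition_restrict [simp]: "log_partition K (restrict x K) = log_partition K x"
  unfolding log_partition_def by (auto intro!: arg_cong[where f = ln] sum.cong)

definition normal_log_partition_mean :: "real \<Rightarrow> nat \<Rightarrow> real" where
  "normal_log_partition_mean s d =
     (\<integral>x. log_partition {0..<d} x \<partial>PiM {0..<d} (\<lambda>_. density lborel (normal_density 0 s)))"

lemma integral_log_partition_eq_normal_log_partition_mean:
  assumes s: "0 < s" and K: "finite K"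
  shows "(\<integral>x. log_partition K x \<partial>PiM K (\<lambda>_. density lborel (normal_density 0 s)))
       = normal_log_partition_mean s (card K)"
proof -
  let ?N = "density lborel (normal_density 0 s)"
  obtain h where h: "bij_betw h {0..<card K} K" using ex_bij_betw_nat_finite[OF K] by blast
  have inj: "inj_on h {0..<card K}" and hK: "h \<in> {0..<card K} \<rightarrow> K" using h by (auto simp: bij_betw_def)
  have D: "distr (PiM K (\<lambda>_. ?N)) (PiM {0..<card K} (\<lambda>i. ?N)) (\<lambda>\<omega>. \<lambda>n\<in>{0..<card K}. \<omega> (h n)) = PiM {0..<card K} (\<lambda>_. ?N)"
    using distr_PiM_reindex[of K "\<lambda>_. ?N" h "{0..<card K}", OF prob_space_normal_density[OF s] inj hK] by simp
  have meas: "(\<lambda>\<omega>. \<lambda>n\<in>{0..<card K}. \<omega> (h n)) \<in> measurable (PiM K (\<lambda>_. ?N)) (PiM {0..<card K} (\<lambda>i. ?N))"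
  proof (rule measurable_restrict)
    fix n assume "n \<in> {0..<card K}"
    then have "h n \<in> K" using hK by auto
    then show "(\<lambda>\<omega>. \<omega> (h n)) \<in> measurable (PiM K (\<lambda>_. ?N)) ?N"
      by (rule measurable_component_singleton)
  qed
  have LM: "log_partition {0..<card K} \<in> borel_measurable (PiM {0..<card K} (\<lambda>i. ?N))"
    using log_partition_measurable_borel[of "{0..<card K}"] measurable_cong_sets[OF sets_PiM_normal refl] by simp
  have "normal_log_partition_mean s (card K)
      = (\<integral>x. log_partition {0..<card K} x \<partial>distr (PiM K (\<lambda>_. ?N)) (PiM {0..<card K} (\<lambda>i. ?N)) (\<lambda>\<omega>. \<lambda>n\<in>{0..<card K}. \<omega> (h n)))"
    by (simp add: D normal_log_partition_mean_def)
  also have "\<dots> = (\<integral>\<omega>. log_partition {0..<card K} (\<lambda>n\<in>{0..<card K}. \<omega> (h n)) \<partial>PiM K (\<lambda>_. ?N))"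
    by (rule integral_distr[OF meas LM])
  also have "\<dots> = (\<integral>\<omega>. log_partition K \<omega> \<partial>PiM K (\<lambda>_. ?N))"
  proof (intro Bochner_Integration.integral_cong refl)
    fix \<omega> :: "'a \<Rightarrow> real"
    have "(\<Sum>n\<in>{0..<card K}. exp (- (\<lambda>n\<in>{0..<card K}. \<omega> (h n)) n)) = (\<Sum>n\<in>{0..<card K}. exp (- \<omega> (h n)))"
      by (intro sum.cong) auto
    also have "\<dots> = (\<Sum>k\<in>K. exp (- \<omega> k))"
      by (rule sum.reindex_bij_betw[OF h, of "\<lambda>k. exp (- \<omega> k)"])
    finally show "log_partition {0..<card K} (\<lambda>n\<in>{0..<card K}. \<omega> (h n)) = log_partition K \<omega>"
      by (simp add: log_partition_def)
  qed
  finally show ?thesis by simp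
qed

lemma (in prob_space) nn_integral_indep_normal_eq_PiM:
  assumes s: "0 < s" and K: "finite K" "K \<noteq> {}"
    and ind: "indep_vars (\<lambda>_. borel) Y K"
    and D: "\<And>k. k \<in> K \<Longrightarrow> distributed M lborel (Y k) (normal_density 0 s)"
    and g: "g \<in> borel_measurable (PiM K (\<lambda>_. borel))"
    and g_restrict: "\<And>x. g (restrict x K) = g x"
  shows "(\<integral>\<^sup>+\<omega>. g (\<lambda>k. Y k \<omega>) \<partial>M) = (\<integral>\<^sup>+x. g x \<partial>PiM K (\<lambda>_. density lborel (normal_density 0 s)))"
proof -
  let ?N = "density lborel (normal_density 0 s)"
  \<comment> \<open>\<open>indep_vars_iff_distr_eq_PiM\<close> wants every variable measurable, also outside \<open>K\<close>.\<close>
  define Y' where "Y' k = (if k \<in> K then Y k else (\<lambda>_. 0))" for k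
  have rv: "random_variable borel (Y' k)" for k
    using D by (auto simp: Y'_def distributed_def)
  have ind': "indep_vars (\<lambda>_. borel) Y' K"
    using ind by (rule indep_vars_cong[THEN iffD1, rotated 3]) (auto simp: Y'_def)
  have "distr M (PiM K (\<lambda>_. borel)) (\<lambda>\<omega>. \<lambda>k\<in>K. Y' k \<omega>) = PiM K (\<lambda>k. distr M borel (Y' k))"
    using indep_vars_iff_distr_eq_PiM[OF K(2) rv] ind' by simp
  also have "\<dots> = PiM K (\<lambda>_. ?N)"
  proof (rule PiM_cong[OF refl])
    fix k assume k: "k \<in> K"
    have "distr M lborel (Y k) = ?N" using D[OF k] by (simp add: distributed_def)
    then show "distr M borel (Y' k) = ?N" using k by (simp add: Y'_def distr_lborel_eq_distr_borel)
  qed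
  finally have DV: "distr M (PiM K (\<lambda>_. borel)) (\<lambda>\<omega>. \<lambda>k\<in>K. Y' k \<omega>) = PiM K (\<lambda>_. ?N)" .
  have Vm: "(\<lambda>\<omega>. \<lambda>k\<in>K. Y' k \<omega>) \<in> measurable M (PiM K (\<lambda>_. borel))"
    using rv by (intro measurable_restrict) auto
  have "(\<lambda>k\<in>K. Y' k \<omega>) = restrict (\<lambda>k. Y k \<omega>) K" for \<omega>
    by (auto simp: Y'_def)
  then have "(\<integral>\<^sup>+\<omega>. g (\<lambda>k. Y k \<omega>) \<partial>M) = (\<integral>\<^sup>+\<omega>. g (\<lambda>k\<in>K. Y' k \<omega>) \<partial>M)"
    by (simp add: g_restrict)
  also have "\<dots> = (\<integral>\<^sup>+x. g x \<partial>distr M (PiM K (\<lambda>_. borel)) (\<lambda>\<omega>. \<lambda>k\<in>K. Y' k \<omega>))"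
    using g by (subst nn_integral_distr[OF Vm]) simp_all
  finally show ?thesis by (simp add: DV)
qed

lemma (in prob_space) indep_normal_log_partition_moments:
  assumes s: "0 < s" and K: "finite K"
    and ind: "indep_vars (\<lambda>_. borel) Y K"
    and D: "\<And>k. k \<in> K \<Longrightarrow> distributed M lborel (Y k) (normal_density 0 s)"
  defines "c \<equiv> normal_log_partition_mean s (card K)"
  shows "(\<integral>\<^sup>+\<omega>. ennreal ((log_partition K (\<lambda>k. Y k \<omega>) - c)\<^sup>2) \<partial>M) \<le> ennreal (s\<^sup>2)" (is ?var)
    and "(\<integral>\<^sup>+\<omega>. ennreal ((log_partition K (\<lambda>k. Y k \<omega>) - c)^4) \<partial>M) \<le> ennreal (5 * s^4)" (is ?fourth)
proof -
  have "?var \<and> ?fourth"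
  proof (cases "K = {}")
    case True
    then show ?thesis by (simp add: c_def normal_log_partition_mean_def log_partition_def)
  next
    case False
    interpret gaussian_coords s by standard (rule s)
    have transfer: "(\<integral>\<^sup>+\<omega>. ennreal ((log_partition K (\<lambda>k. Y k \<omega>) - c) ^ p) \<partial>M)
        = (\<integral>\<^sup>+x. ennreal ((log_partition K x - c) ^ p) \<partial>PiM K (\<lambda>_. N))" for p
    proof (rule nn_integral_indep_normal_eq_PiM[OF s K False ind D])
      show "(\<lambda>x. ennreal ((log_partition K x - c) ^ p)) \<in> borel_measurable (PiM K (\<lambda>_. borel))"
        using log_partition_measurable_borel[OF K] by measurable
    qed simp_all
    have c_eq: "c = (\<integral>x. log_partition K x \<partial>PiM K (\<lambda>_. N))"
      unfolding c_def by (rule integral_log_partition_eq_normal_log_partition_mean[OF s K, symmetric])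
    show ?thesis
      using transfer[of 2] transfer[of 4] log_partition_variance_le[OF K False]
        log_partition_fourth_moment_le[OF K False]
      by (simp add: c_eq)
  qed
  then show ?var and ?fourth by auto
qed

section \<open>Energy landscapes\<close>

lemma vertex_log_partition_moments:
  fixes i :: nat
  assumes "prob_space M" and \<sigma>B: "0 < \<sigma>B"
    and "simple_graph_on n E" and "disordered_landscape M n E \<sigma>W \<sigma>B W B"
  defines "c \<equiv> normal_log_partition_mean \<sigma>B (card (nbrs n E i))"
  shows "(\<integral>\<^sup>+\<omega>. ennreal ((A_val n E B i \<omega> - c)\<^sup>2) \<partial>M) \<le> ennreal (\<sigma>B\<^sup>2)"
    and "(\<integral>\<^sup>+\<omega>. ennreal ((A_val n E B i \<omega> - c)^4) \<partial>M) \<le> ennreal (5 * \<sigma>B^4)"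
proof -
  interpret prob_space M by fact
  have indB: "indep_vars (\<lambda>_. borel) (\<lambda>(i, j). B i j) {(i, j). E i j \<and> i < j}"
    and symB: "\<And>i j. E i j \<Longrightarrow> B i j = B j i"
    and distB: "\<And>i j. E i j \<Longrightarrow> distributed M lborel (B i j) (normal_density 0 \<sigma>B)"
    using assms(4) unfolding disordered_landscape_def by auto
  have symE: "\<And>i j. E i j \<Longrightarrow> E j i" and irrE: "\<And>i. \<not> E i i"
    using assms(3) unfolding simple_graph_on_def by auto
  define J where "J = nbrs n E i"
  have J: "finite J" and EJ: "\<And>j. j \<in> J \<Longrightarrow> E i j" by (auto simp: J_def nbrs_def)
  \<comment> \<open>Independence is given over edges \<open>(a, b)\<close> with \<open>a < b\<close>, so index the barriers at \<open>i\<close> by edges.\<close>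
  define edge where "edge j = (min i j, max i j)" for j
  define Y where "Y = (\<lambda>(a, b). B a b)"
  have inj: "inj_on edge J" unfolding inj_on_def edge_def by (auto simp: min_def max_def split: if_splits)
  have edges: "edge ` J \<subseteq> {(i, j). E i j \<and> i < j}"
  proof
    fix e assume "e \<in> edge ` J"
    then obtain j where j: "j \<in> J" and e: "e = edge j" by auto
    have "E i j" by (rule EJ[OF j])
    moreover have "i \<noteq> j" using \<open>E i j\<close> irrE by auto
    ultimately show "e \<in> {(i, j). E i j \<and> i < j}"
      using symE[of i j] by (auto simp: e edge_def min_def max_def)
  qed
  have indK: "indep_vars (\<lambda>_. borel) Y (edge ` J)"
    unfolding Y_def by (rule indep_vars_subset[OF indB edges])
  have distK: "distributed M lborel (Y e) (normal_density 0 \<sigma>B)" if "e \<in> edge ` J" for e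
    using edges that distB by (auto simp: Y_def)
  have A_eq: "A_val n E B i \<omega> = log_partition (edge ` J) (\<lambda>e. Y e \<omega>)" for \<omega>
  proof -
    have "(\<Sum>e\<in>edge ` J. exp (- Y e \<omega>)) = (\<Sum>j\<in>J. exp (- Y (edge j) \<omega>))"
      by (simp add: sum.reindex[OF inj])
    also have "\<dots> = (\<Sum>j\<in>J. exp (- B i j \<omega>))"
      using symB[OF EJ] by (intro sum.cong refl) (auto simp: Y_def edge_def min_def max_def)
    finally show ?thesis by (simp add: A_val_def log_partition_def J_def)
  qed
  have "c = normal_log_partition_mean \<sigma>B (card (edge ` J))"
    by (simp add: c_def J_def card_image[OF inj[unfolded J_def]])
  then show "(\<integral>\<^sup>+\<omega>. ennreal ((A_val n E B i \<omega> - c)\<^sup>2) \<partial>M) \<le> ennreal (\<sigma>B\<^sup>2)"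
    and "(\<integral>\<^sup>+\<omega>. ennreal ((A_val n E B i \<omega> - c)^4) \<partial>M) \<le> ennreal (5 * \<sigma>B^4)"
    unfolding A_eq using indep_normal_log_partition_moments[OF \<sigma>B _ indK distK] J by simp_all
qed

lemma A_val_measurable:
  assumes "disordered_landscape M n E \<sigma>W \<sigma>B W B"
  shows "A_val n E B i \<in> borel_measurable M"
proof -
  have "B i j \<in> borel_measurable M" if "j \<in> nbrs n E i" for j
    using assms that by (auto simp: disordered_landscape_def nbrs_def distributed_def)
  then show ?thesis
    unfolding A_val_def by (measurable; simp add: nbrs_def)
qed

lemma empirical_variance_le:
  fixes a :: "nat \<Rightarrow> real" and n :: nat and c :: real
  assumes n: "n > 0"
  defines "v \<equiv> (let m = (\<Sum>i<n. a i) / real n in (\<Sum>i<n. (a i - m)\<^sup>2) / real n)"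
  shows "0 \<le> v" "v \<le> (\<Sum>i<n. (a i - c)\<^sup>2) / real n" "v\<^sup>2 \<le> (\<Sum>i<n. (a i - c)^4) / real n"
proof -
  define m where "m = (\<Sum>i<n. a i) / real n"
  have v: "v = (\<Sum>i<n. (a i - m)\<^sup>2) / real n" by (simp add: v_def m_def Let_def)
  show v0: "0 \<le> v" unfolding v by (intro divide_nonneg_nonneg sum_nonneg) auto
  have sm: "(\<Sum>i<n. a i) = real n * m" using n by (simp add: m_def)
  have "(\<Sum>i<n. (a i - c)\<^sup>2) = (\<Sum>i<n. (a i - m)\<^sup>2 + 2 * (m - c) * a i + (c\<^sup>2 - m\<^sup>2))"
    by (intro sum.cong refl) (simp add: power2_eq_square algebra_simps)
  also have "\<dots> = (\<Sum>i<n. (a i - m)\<^sup>2) + 2 * (m - c) * (\<Sum>i<n. a i) + real n * (c\<^sup>2 - m\<^sup>2)"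
    by (simp add: sum.distrib sum_distrib_left)
  also have "\<dots> = (\<Sum>i<n. (a i - m)\<^sup>2) + real n * (m - c)\<^sup>2"
    unfolding sm by (simp add: power2_eq_square algebra_simps)
  finally have "(\<Sum>i<n. (a i - m)\<^sup>2) \<le> (\<Sum>i<n. (a i - c)\<^sup>2)" by simp
  then show v1: "v \<le> (\<Sum>i<n. (a i - c)\<^sup>2) / real n" unfolding v using n by (simp add: divide_right_mono)
  have "v\<^sup>2 \<le> ((\<Sum>i<n. (a i - c)\<^sup>2) / real n)\<^sup>2" by (rule power_mono[OF v1 v0])
  also have "\<dots> = (\<Sum>i<n. (a i - c)\<^sup>2)\<^sup>2 / (real n)\<^sup>2" by (simp add: power_divide)
  also have "\<dots> \<le> ((\<Sum>i<n. ((a i - c)\<^sup>2)\<^sup>2) * real n) / (real n)\<^sup>2"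
    by (intro divide_right_mono) (use sum_squared_le_sum_of_squares[of "\<lambda>i. (a i - c)\<^sup>2" "{..<n}"] in auto)
  also have "\<dots> = (\<Sum>i<n. (a i - c)^4) / real n"
    using n by (simp add: power2_eq_square power4_eq_xxxx field_simps)
  finally show "v\<^sup>2 \<le> (\<Sum>i<n. (a i - c)^4) / real n" .
qed


lemma nn_integral_average_le:
  fixes g :: "nat \<Rightarrow> 'a \<Rightarrow> real"
  assumes n: "n > 0" and gm: "\<And>i. i < n \<Longrightarrow> g i \<in> borel_measurable M"
    and g0: "\<And>i \<omega>. 0 \<le> g i \<omega>"
    and b: "\<And>i. i < n \<Longrightarrow> (\<integral>\<^sup>+\<omega>. ennreal (g i \<omega>) \<partial>M) \<le> ennreal K"
  shows "(\<integral>\<^sup>+\<omega>. ennreal ((\<Sum>i<n. g i \<omega>) / real n) \<partial>M) \<le> ennreal K"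
proof -
  have "ennreal ((\<Sum>i<n. g i \<omega>) / real n) = ennreal (1 / real n) * (\<Sum>i<n. ennreal (g i \<omega>))" for \<omega>
    using g0 by (simp add: sum_ennreal sum_nonneg ennreal_mult[symmetric])
  then have "(\<integral>\<^sup>+\<omega>. ennreal ((\<Sum>i<n. g i \<omega>) / real n) \<partial>M)
      = ennreal (1 / real n) * (\<Sum>i<n. \<integral>\<^sup>+\<omega>. ennreal (g i \<omega>) \<partial>M)"
    using gm by (simp add: nn_integral_cmult) (subst nn_integral_sum; auto)
  also have "\<dots> \<le> ennreal (1 / real n) * (\<Sum>i<n. ennreal K)"
    by (intro mult_left_mono sum_mono b) auto
  also have "\<dots> = ennreal K"
    using n by (simp add: ennreal_of_nat_eq_real_of_nat ennreal_mult'[symmetric])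
  finally show ?thesis .
qed

theorem lemma6:
  fixes M :: "'a measure" and n :: nat and E :: "nat \<Rightarrow> nat \<Rightarrow> bool"
    and \<sigma>W \<sigma>B :: real and W :: "nat \<Rightarrow> 'a \<Rightarrow> real" and B :: "nat \<Rightarrow> nat \<Rightarrow> 'a \<Rightarrow> real"
  assumes "prob_space M"
    and "\<sigma>W > 0" and "\<sigma>B > 0"
    and "n > 0"
    and "simple_graph_on n E" and "regular_graph n E"
    and "disordered_landscape M n E \<sigma>W \<sigma>B W B"
    and "separable M n E W B"
  shows "(\<integral>\<^sup>+ \<omega>. ennreal (var_A n E B \<omega>) \<partial>M) \<le> ennreal (4 * \<sigma>B\<^sup>2) \<and>
         (\<integral>\<^sup>+ \<omega>. ennreal ((var_A n E B \<omega>)\<^sup>2) \<partial>M) \<le> ennreal (1720 * \<sigma>B ^ 4)"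
proof -
  obtain d where deg: "\<And>i. i < n \<Longrightarrow> card (nbrs n E i) = d"
    using assms(6) unfolding regular_graph_def by auto
  define c where "c = normal_log_partition_mean \<sigma>B d"
  define avg_dev where "avg_dev p \<omega> = (\<Sum>i<n. (A_val n E B i \<omega> - c) ^ p) / real n" for p \<omega>
  have moments: "(\<integral>\<^sup>+\<omega>. ennreal ((A_val n E B i \<omega> - c)\<^sup>2) \<partial>M) \<le> ennreal (\<sigma>B\<^sup>2)"
    "(\<integral>\<^sup>+\<omega>. ennreal ((A_val n E B i \<omega> - c)^4) \<partial>M) \<le> ennreal (5 * \<sigma>B^4)" if "i < n" for i
    using vertex_log_partition_moments[OF assms(1,3,5,7), of i] deg[OF that] by (simp_all add: c_def)
  have var_le: "0 \<le> var_A n E B \<omega>" "var_A n E B \<omega> \<le> avg_dev 2 \<omega>" "(var_A n E B \<omega>)\<^sup>2 \<le> avg_dev 4 \<omega>" for \<omega>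
    using empirical_variance_le[OF assms(4), of "\<lambda>i. A_val n E B i \<omega>"]
      empirical_variance_le(2-3)[OF assms(4), of "\<lambda>i. A_val n E B i \<omega>" c]
    unfolding var_A_def avg_dev_def by simp_all
  have "(\<integral>\<^sup>+\<omega>. ennreal (var_A n E B \<omega>) \<partial>M) \<le> (\<integral>\<^sup>+\<omega>. ennreal (avg_dev 2 \<omega>) \<partial>M)"
    using var_le by (intro nn_integral_mono ennreal_leI) auto
  also have "\<dots> \<le> ennreal (4 * \<sigma>B\<^sup>2)"
    unfolding avg_dev_def using assms(4) A_val_measurable[OF assms(7)]
    by (intro nn_integral_average_le order_trans[OF moments(1) ennreal_leI]) auto
  finally have mean: "(\<integral>\<^sup>+\<omega>. ennreal (var_A n E B \<omega>) \<partial>M) \<le> ennreal (4 * \<sigma>B\<^sup>2)" .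
  have "(\<integral>\<^sup>+\<omega>. ennreal ((var_A n E B \<omega>)\<^sup>2) \<partial>M) \<le> (\<integral>\<^sup>+\<omega>. ennreal (avg_dev 4 \<omega>) \<partial>M)"
    using var_le by (intro nn_integral_mono ennreal_leI) auto
  also have "\<dots> \<le> ennreal (1720 * \<sigma>B ^ 4)"
    unfolding avg_dev_def using assms(4) A_val_measurable[OF assms(7)]
    by (intro nn_integral_average_le order_trans[OF moments(2) ennreal_leI]) auto
  finally show ?thesis using mean by simp
qed

end
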